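(* Suppose the support of $\mathbb F$ is $(0,1)$. Then any optimal monotone threshold mechanism for agent $i$ excludes a bottom type: there exists $\epsilon_i>0$ such that $x_i(s_i,s_{-i})=0$ for all $s_i\le\epsilon_i$ and all $s_{-i}$. Consequently, the efficient allocation $x_i(s_i,s_{-i})=\mathbb I\{\mathrm{LR}(s_i,s_{-i})\ge1\}$ is never optimal.
   Context: Setup. A state $\omega\in\{-1,+1\}$ is drawn with probability $1/2$ each. There are $n\ge 2$ agents. Conditional on $\omega$, signals $s_1,\dots,s_n$ are i.i.d. with distribution $\mathbb F_\omega$ on $[0,1]$, normalized so that $s_i=\mathbb P[\omega=+1\mid s_i]$. $\mathbb F_{-1},\mathbb F_{+1}$ are mutually absolutely continuous with densities; $\mathbb F=(\mathbb F_{-1}+\mathbb F_{+1})/2$ has density $f$, differentiable on its support with continuous derivative and $|f'/f|$ bounded. $\mathrm{LR}(E)=\mathbb P[E\mid\omega=+1]/\mathbb P[E\mid\omega=-1]$; $\mathrm{LR}(s_{-i})=\prod_{k\ne i}\frac{s_k}{1-s_k}$, $\mathrm{LR}(s_i,s_{-i})=\prod_k\frac{s_k}{1-s_k}$. A mechanism is a measurable $x$ mapping signal profiles to $[0,1]^n$ ($x_i(s)$ = probability agent $i$ gets a good worth $\omega$ to her, else $0$). Feasibility for agent $i$: for all types $s_i,\hat s_i$, (P) $\mathbb E[\omega x_i(s_i,s_{-i})\mid s_i]\ge0$ and (IC) $\mathbb E[\omega x_i(s_i,s_{-i})\mid s_i]\ge\mathbb E[\omega x_i(\hat s_i,s_{-i})\mid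 s_i]$. Optimal for agent $i$: maximizes $\mathbb E[x_i(s)]$ subject to (P),(IC). Monotone threshold mechanism: a partition of the signal space into intervals such that on each interval $S$, $x_i(s_i,s_{-i})=\kappa\,\mathbb I\{\mathrm{LR}(s_{-i})\ge\tau\}$ for some $\kappa\in[0,1]$, $\tau\ge0$. *)

theory Defs
  imports "HOL-Analysis.Analysis"
begin

text \<open>Agents are indexed by a finite type 'a (n = CARD('a)).  The conditional signal densities (w.r.t. Lebesgue measure) are
fp (state +1) and fm (state -1); the unconditional density is f = (fm + fp)/2.\<close>

definition mixf :: "(real \<Rightarrow> real) \<Rightarrow> (real \<Rightarrow> real) \<Rightarrow> real \<Rightarrow> real" where
  "mixf fp fm u = (fp u + fm u) / 2"

definition sig_profile :: "('a \<Rightarrow> real) \<Rightarrow> bool" where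
  "sig_profile s \<longleftrightarrow> (\<forall>k. s k \<in> {0<..<1})"

definition LR_minus :: "'a::finite \<Rightarrow> ('a \<Rightarrow> real) \<Rightarrow> real" where
  "LR_minus i s = (\<Prod>k\<in>UNIV - {i}. s k / (1 - s k))"

definition LR_full :: "('a::finite \<Rightarrow> real) \<Rightarrow> real" where
  "LR_full s = (\<Prod>k\<in>UNIV. s k / (1 - s k))"

definition is_mechanism :: "(('a::finite \<Rightarrow> real) \<Rightarrow> 'a \<Rightarrow> real) \<Rightarrow> bool" where
  "is_mechanism x \<longleftrightarrow>
     (\<forall>i. (\<lambda>s. x s i) \<in> borel_measurable (PiM UNIV (\<lambda>_. lborel))) \<and>
     (\<forall>s i. sig_profile s \<longrightarrow> 0 \<le> x s i \<and> x s i \<le> 1)"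

text \<open>cond_gain fp fm x i si t = E[omega * x_i(t, s_{-i}) | s_i = si].
  Given s_i = si, P[omega=+1 | si] = si, and s_{-i} has conditional density
  prod fp (resp. prod fm) given omega = +1 (resp. -1).\<close>
definition cond_gain ::
  "(real \<Rightarrow> real) \<Rightarrow> (real \<Rightarrow> real) \<Rightarrow> (('a::finite \<Rightarrow> real) \<Rightarrow> 'a \<Rightarrow> real) \<Rightarrow> 'a \<Rightarrow> real \<Rightarrow> real \<Rightarrow> real"
  where
  "cond_gain fp fm x i si t =
     (\<integral>r. (si * (\<Prod>k\<in>UNIV - {i}. fp (r k)) - (1 - si) * (\<Prod>k\<in>UNIV - {i}. fm (r k)))
           * x (r(i := t)) i \<partial>(PiM (UNIV - {i}) (\<lambda>_. lborel)))"

definition feasible ::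
  "(real \<Rightarrow> real) \<Rightarrow> (real \<Rightarrow> real) \<Rightarrow> (('a::finite \<Rightarrow> real) \<Rightarrow> 'a \<Rightarrow> real) \<Rightarrow> 'a \<Rightarrow> bool"
  where
  "feasible fp fm x i \<longleftrightarrow>
     (\<forall>si\<in>{0<..<1}. 0 \<le> cond_gain fp fm x i si si \<and>
        (\<forall>t\<in>{0<..<1}. cond_gain fp fm x i si t \<le> cond_gain fp fm x i si si))"

text \<open>E[x_i(s)]: the joint density of the profile is (prod fp + prod fm)/2.\<close>
definition expected_alloc ::
  "(real \<Rightarrow> real) \<Rightarrow> (real \<Rightarrow> real) \<Rightarrow> (('a::finite \<Rightarrow> real) \<Rightarrow> 'a \<Rightarrow> real) \<Rightarrow> 'a \<Rightarrow> real"
  where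
  "expected_alloc fp fm x i =
     (\<integral>s. ((\<Prod>k\<in>UNIV. fp (s k)) + (\<Prod>k\<in>UNIV. fm (s k))) / 2 * x s i
        \<partial>(PiM UNIV (\<lambda>_. lborel)))"

definition optimal ::
  "(real \<Rightarrow> real) \<Rightarrow> (real \<Rightarrow> real) \<Rightarrow> (('a::finite \<Rightarrow> real) \<Rightarrow> 'a \<Rightarrow> real) \<Rightarrow> 'a \<Rightarrow> bool"
  where
  "optimal fp fm x i \<longleftrightarrow> is_mechanism x \<and> feasible fp fm x i \<and>
     (\<forall>y. is_mechanism y \<and> feasible fp fm y i \<longrightarrow> expected_alloc fp fm y i \<le> expected_alloc fp fm x i)"

definition mono_threshold :: "(('a::finite \<Rightarrow> real) \<Rightarrow> 'a \<Rightarrow> real) \<Rightarrow> 'a \<Rightarrow> bool" where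
  "mono_threshold x i \<longleftrightarrow>
     (\<exists>P. (\<forall>S\<in>P. S \<noteq> {} \<and> is_interval S) \<and> disjoint P \<and> \<Union>P = {0<..<1} \<and>
        (\<forall>S\<in>P. \<exists>\<kappa> \<tau>. 0 \<le> \<kappa> \<and> \<kappa> \<le> 1 \<and> 0 \<le> \<tau> \<and>
           (\<forall>s. sig_profile s \<and> s i \<in> S \<longrightarrow>
                 x s i = \<kappa> * (if LR_minus i s \<ge> \<tau> then 1 else 0))))"

definition efficient_mech :: "('a::finite \<Rightarrow> real) \<Rightarrow> 'a \<Rightarrow> real" where
  "efficient_mech s j = (if LR_full s \<ge> 1 then 1 else 0)"

end

theory Submission
  imports Defs
begin

text \<open>
  Everything reduces to agent \<open>i\<close>'s interim allocations \<open>P t\<close> and \<open>M t\<close>, the probabilities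
  that a report \<open>t\<close> wins in state \<open>+1\<close> resp. \<open>-1\<close>.  Incentive compatibility makes \<open>P + M\<close>
  monotone and yields the envelope formula: the gain of type \<open>s\<close> is the integral of \<open>P + M\<close>
  below \<open>s\<close>.  If types arbitrarily close to \<open>0\<close> are served, pick a small \<open>t1\<close> with \<open>M t1 > 0\<close>
  and let \<open>t0\<close> be the type indifferent to the allocation of \<open>t1\<close>.  Excluding all types below \<open>t0\<close>
  and pooling \<open>(t0, t1)\<close> with \<open>t1\<close> keeps the mechanism feasible, and by the envelope formula and
  Fubini the change of the expected allocation is \<open>\<integral> h w\<close>: here \<open>h\<close>, the change of \<open>P + M\<close>,
  is negative below \<open>t0\<close>, nonnegative above and integrates to \<open>0\<close>, while \<open>w\<close> is increasing near
  \<open>0\<close> because the density has a bounded logarithmic derivative.  So the change is positive.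
  A threshold mechanism serving a type at all serves it with \<open>M > 0\<close>, since the likelihood
  ratio of the other agents exceeds any threshold with positive probability; and the efficient
  mechanism is a threshold mechanism serving every type.
\<close>

section \<open>Integrals on the real line\<close>

lemma set_integrable_bounded:
  fixes f :: "real \<Rightarrow> real"
  assumes "A \<in> sets lborel" "bounded A" "f \<in> borel_measurable lborel"
    and "\<And>x. x \<in> A \<Longrightarrow> \<bar>f x\<bar> \<le> C"
  shows "set_integrable lborel A f"
  unfolding set_integrable_def using assms emeasure_bounded_finite[of A]
  by (intro integrableI_bounded_set_indicator[where B = C]) auto

lemma set_integrable_mult_bounded:
  fixes f b :: "real \<Rightarrow> real"
  assumes f: "set_integrable lborel A f" and b: "b \<in> borel_measurable lborel"
    and bound: "\<And>x. x \<in> A \<Longrightarrow> \<bar>b x\<bar> \<le> C"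
  shows "set_integrable lborel A (\<lambda>x. f x * b x)"
proof (rule set_integrable_bound)
  show "set_integrable lborel A (\<lambda>x. C * f x)"
    using f by (rule set_integrable_mult_right)
  have "(\<lambda>x. (indicator A x *\<^sub>R f x) * b x) \<in> borel_measurable lborel"
    using f b unfolding set_integrable_def by (intro borel_measurable_times) auto
  then show "set_borel_measurable lborel A (\<lambda>x. f x * b x)"
    unfolding set_borel_measurable_def by (simp add: mult.assoc)
  show "AE x in lborel. x \<in> A \<longrightarrow> norm (f x * b x) \<le> norm (C * f x)"
  proof (intro AE_I2 impI)
    fix x assume "x \<in> A"
    then have "\<bar>b x\<bar> * \<bar>f x\<bar> \<le> \<bar>C\<bar> * \<bar>f x\<bar>"
      using bound[of x] by (intro mult_right_mono) auto
    then show "norm (f x * b x) \<le> norm (C * f x)"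
      by (simp add: abs_mult mult.commute)
  qed
qed

lemma set_integral_Ioc_bounds:
  fixes g :: "real \<Rightarrow> real"
  assumes "x \<le> y" "set_integrable lborel {x<..y} g" "\<And>r. r \<in> {x<..y} \<Longrightarrow> l \<le> g r \<and> g r \<le> u"
  shows "(y - x) * l \<le> (LINT r:{x<..y}|lborel. g r) \<and> (LINT r:{x<..y}|lborel. g r) \<le> (y - x) * u"
proof -
  have const: "(LINT r:{x<..y}|lborel. c) = (y - x) * c" for c
    using \<open>x \<le> y\<close> by (subst set_integral_const) (auto simp: emeasure_lborel_Ioc)
  have "set_integrable lborel {x<..y} (\<lambda>_. c)" for c :: real
    by (rule set_integrable_bounded[where C = "\<bar>c\<bar>"]) auto
  then have "(LINT r:{x<..y}|lborel. l) \<le> (LINT r:{x<..y}|lborel. g r)"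
    and "(LINT r:{x<..y}|lborel. g r) \<le> (LINT r:{x<..y}|lborel. u)"
    using assms(2,3) by (auto intro!: set_integral_mono)
  then show ?thesis
    by (simp add: const)
qed

lemma set_integral_pos_interval:
  fixes g :: "real \<Rightarrow> real"
  assumes int: "set_integrable lborel A g" and A: "A \<in> sets lborel"
    and nonneg: "\<And>x. x \<in> A \<Longrightarrow> 0 \<le> g x" and sub: "{a<..<b} \<subseteq> A" and "a < b"
    and pos: "\<And>x. x \<in> {a<..<b} \<Longrightarrow> 0 < g x"
  shows "0 < (LINT x:A|lborel. g x)"
proof -
  have nonneg_AE: "AE x in lborel. 0 \<le> indicator A x * g x"
    using nonneg by (auto split: split_indicator)
  have "(LINT x:A|lborel. g x) \<noteq> 0"
  proof
    assume "(LINT x:A|lborel. g x) = 0"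
    then have "AE x in lborel. indicator A x * g x = 0"
      using int nonneg_AE unfolding set_lebesgue_integral_def set_integrable_def
      by (simp add: integral_nonneg_eq_0_iff_AE)
    then have "AE x in lborel. x \<notin> {a<..<b}"
      by eventually_elim (use sub pos in \<open>fastforce split: split_indicator\<close>)
    then have "emeasure lborel {x \<in> space lborel. x \<in> {a<..<b}} = 0"
      by (rule emeasure_eq_0_AE)
    moreover have "{x \<in> space lborel. x \<in> {a<..<b}} = {a<..<b}"
      by auto
    ultimately show False
      using \<open>a < b\<close> by (simp add: emeasure_lborel_Ioo)
  qed
  moreover have "0 \<le> (LINT x:A|lborel. g x)"
    unfolding set_lebesgue_integral_def using nonneg_AE by (simp add: integral_nonneg_AE)
  ultimately show ?thesis by simp
qed

lemma eq_if_increments_bounded: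
  fixes G Q :: "real \<Rightarrow> real"
  assumes "a \<le> b"
    and incr: "\<And>x y. a \<le> x \<Longrightarrow> x \<le> y \<Longrightarrow> y \<le> b \<Longrightarrow> \<bar>G y - G x\<bar> \<le> (y - x) * (Q y - Q x)"
  shows "G a = G b"
proof -
  have partition_bound: "\<bar>G b - G a\<bar> \<le> (b - a) * (Q b - Q a) / real N" if "N > 0" for N
  proof -
    define x where "x k = a + real k * (b - a) / real N" for k
    have x_ends: "x 0 = a" "x N = b"
      using that by (auto simp: x_def)
    have x_step: "x (Suc k) - x k = (b - a) / real N" for k
      unfolding x_def by (simp add: add_divide_distrib[symmetric] algebra_simps)
    have x_range: "a \<le> x k \<and> x k \<le> b" if "k \<le> N" for k
    proof -
      have "real k * (b - a) / real N \<le> real N * (b - a) / real N"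
        using that \<open>a \<le> b\<close> by (intro divide_right_mono mult_right_mono) auto
      then show ?thesis
        using \<open>a \<le> b\<close> \<open>N > 0\<close> by (simp add: x_def)
    qed
    have "\<bar>G b - G a\<bar> = \<bar>\<Sum>k<N. G (x (Suc k)) - G (x k)\<bar>"
      by (subst sum_lessThan_telescope[of "\<lambda>k. G (x k)"]) (simp add: x_ends)
    also have "\<dots> \<le> (\<Sum>k<N. \<bar>G (x (Suc k)) - G (x k)\<bar>)"
      by (rule sum_abs)
    also have "\<dots> \<le> (\<Sum>k<N. (b - a) / real N * (Q (x (Suc k)) - Q (x k)))"
    proof (rule sum_mono)
      fix k assume "k \<in> {..<N}"
      then have "a \<le> x k" "x (Suc k) \<le> b"
        using x_range[of k] x_range[of "Suc k"] by auto
      moreover have "x k \<le> x (Suc k)"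
        using x_step[of k] divide_nonneg_nonneg[of "b - a" "real N"] \<open>a \<le> b\<close> by linarith
      ultimately show "\<bar>G (x (Suc k)) - G (x k)\<bar> \<le> (b - a) / real N * (Q (x (Suc k)) - Q (x k))"
        using incr x_step by metis
    qed
    also have "\<dots> = (b - a) / real N * (Q b - Q a)"
      by (simp only: sum_distrib_left[symmetric] sum_lessThan_telescope[of "\<lambda>k. Q (x k)"] x_ends)
    also have "\<dots> = (b - a) * (Q b - Q a) / real N"
      by simp
    finally show ?thesis .
  qed
  have "(\<lambda>N. (b - a) * (Q b - Q a) / real N) \<longlonglongrightarrow> 0"
    by (rule lim_const_over_n)
  then have "\<bar>G b - G a\<bar> \<le> 0"
  proof (rule LIMSEQ_le_const)
    show "\<exists>N. \<forall>n\<ge>N. \<bar>G b - G a\<bar> \<le> (b - a) * (Q b - Q a) / real n"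
      using partition_bound by (intro exI[of _ 1]) auto
  qed
  then show ?thesis by simp
qed

lemma set_integral_Ioc_increment_bounds:
  fixes Q :: "real \<Rightarrow> real"
  assumes "a \<le> x" "x \<le> y" and int: "set_integrable lborel {a<..y} Q"
    and between: "\<And>r. r \<in> {x<..y} \<Longrightarrow> Q x \<le> Q r \<and> Q r \<le> Q y"
  shows "(y - x) * Q x \<le> (LINT r:{a<..y}|lborel. Q r) - (LINT r:{a<..x}|lborel. Q r)"
    and "(LINT r:{a<..y}|lborel. Q r) - (LINT r:{a<..x}|lborel. Q r) \<le> (y - x) * Q y"
proof -
  have "{a<..y} = {a<..x} \<union> {x<..y}" "{a<..x} \<inter> {x<..y} = {}"
    using assms by auto
  moreover have "set_integrable lborel {a<..x} Q" "set_integrable lborel {x<..y} Q"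
    using assms by (auto intro: set_integrable_subset[OF int])
  ultimately have "(LINT r:{a<..y}|lborel. Q r) = (LINT r:{a<..x}|lborel. Q r) + (LINT r:{x<..y}|lborel. Q r)"
    by (simp add: set_integral_Un)
  moreover have "(y - x) * Q x \<le> (LINT r:{x<..y}|lborel. Q r) \<and> (LINT r:{x<..y}|lborel. Q r) \<le> (y - x) * Q y"
    using \<open>x \<le> y\<close> \<open>set_integrable lborel {x<..y} Q\<close> between by (rule set_integral_Ioc_bounds)
  ultimately show "(y - x) * Q x \<le> (LINT r:{a<..y}|lborel. Q r) - (LINT r:{a<..x}|lborel. Q r)"
    and "(LINT r:{a<..y}|lborel. Q r) - (LINT r:{a<..x}|lborel. Q r) \<le> (y - x) * Q y"
    by linarith+
qed

lemma eq_0_if_const_and_small: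
  fixes G :: "real \<Rightarrow> real"
  assumes "0 < s" "0 \<le> C" and const: "\<And>a. 0 < a \<Longrightarrow> a \<le> s \<Longrightarrow> G a = G s"
    and small: "\<And>a. 0 < a \<Longrightarrow> a \<le> s \<Longrightarrow> \<bar>G a\<bar> \<le> C * a"
  shows "G s = 0"
proof -
  have "\<bar>G s\<bar> \<le> 0 + e" if "0 < e" for e
  proof -
    define a where "a = min s (e / (C + 1))"
    have "0 < a" "a \<le> s" "a \<le> e / (C + 1)"
      using that assms(1,2) by (auto simp: a_def)
    then have "(C + 1) * a \<le> e"
      using \<open>0 \<le> C\<close> by (simp add: pos_le_divide_eq mult.commute)
    then show ?thesis
      using const[of a] small[of a] \<open>0 < a\<close> \<open>a \<le> s\<close> by (simp add: algebra_simps)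
  qed
  then show ?thesis
    using field_le_epsilon[of "\<bar>G s\<bar>" 0] by simp
qed

section \<open>Screening with interim allocations\<close>

definition interim_gain :: "(real \<Rightarrow> real) \<Rightarrow> (real \<Rightarrow> real) \<Rightarrow> real \<Rightarrow> real \<Rightarrow> real" where
  "interim_gain p m s t = s * p t - (1 - s) * m t"

definition feasible_interim :: "(real \<Rightarrow> real) \<Rightarrow> (real \<Rightarrow> real) \<Rightarrow> bool" where
  "feasible_interim p m \<longleftrightarrow> (\<forall>s\<in>{0<..<1}. 0 \<le> interim_gain p m s s \<and>
     (\<forall>t\<in>{0<..<1}. interim_gain p m s t \<le> interim_gain p m s s))"

definition interim_rule :: "(real \<Rightarrow> real) \<Rightarrow> bool" where
  "interim_rule p \<longleftrightarrow> p \<in> borel_measurable borel \<and> (\<forall>t\<in>{0<..<1}. 0 \<le> p t \<and> p t \<le> 1)"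

lemma set_integrable_interim_rule:
  assumes "interim_rule p" "y < 1"
  shows "set_integrable lborel {0<..y} p"
proof (rule set_integrable_bounded[where C = 1])
  fix x assume "x \<in> {0<..y}"
  then have "x \<in> {0<..<1}"
    using \<open>y < 1\<close> by auto
  then show "\<bar>p x\<bar> \<le> 1"
    using assms(1) unfolding interim_rule_def by auto
qed (use assms(1) in \<open>auto simp: interim_rule_def\<close>)

lemma interim_gain_shift: "interim_gain p m s t = interim_gain p m u t - (u - s) * (p t + m t)"
  unfolding interim_gain_def by (simp add: algebra_simps)

lemma feasible_interim_gain_bounds:
  assumes "feasible_interim p m" "a \<in> {0<..<1}" "b \<in> {0<..<1}"
  shows "(b - a) * (p a + m a) \<le> interim_gain p m b b - interim_gain p m a a"
    and "interim_gain p m b b - interim_gain p m a a \<le> (b - a) * (p b + m b)"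
proof -
  have "interim_gain p m a b \<le> interim_gain p m a a" "interim_gain p m b a \<le> interim_gain p m b b"
    using assms unfolding feasible_interim_def by auto
  moreover have "interim_gain p m b a = interim_gain p m a a + (b - a) * (p a + m a)"
    and "interim_gain p m a b = interim_gain p m b b - (b - a) * (p b + m b)"
    unfolding interim_gain_def by (simp_all add: algebra_simps)
  ultimately show "(b - a) * (p a + m a) \<le> interim_gain p m b b - interim_gain p m a a"
    and "interim_gain p m b b - interim_gain p m a a \<le> (b - a) * (p b + m b)"
    by linarith+
qed

lemma feasible_interim_total_mono:
  assumes "feasible_interim p m" "0 < a" "a \<le> b" "b < 1"
  shows "p a + m a \<le> p b + m b"
proof -
  have "(b - a) * (p a + m a) \<le> (b - a) * (p b + m b)"
    using feasible_interim_gain_bounds[of p m a b] assms by fastforce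
  then show ?thesis
    using assms by (cases "a = b") (auto simp: mult_le_cancel_left)
qed

lemma feasible_interim_gain_mono:
  assumes "feasible_interim p m" "0 < s" "s < t1" "t1 \<le> t" "t < 1"
  shows "interim_gain p m s t \<le> interim_gain p m s t1"
proof -
  have "interim_gain p m t1 t \<le> interim_gain p m t1 t1"
    using assms unfolding feasible_interim_def by auto
  moreover have "(t1 - s) * (p t1 + m t1) \<le> (t1 - s) * (p t + m t)"
    using feasible_interim_total_mono[of p m t1 t] assms by (intro mult_left_mono) auto
  ultimately show ?thesis
    using interim_gain_shift[of p m s t t1] interim_gain_shift[of p m s t1 t1] by linarith
qed

text \<open>No constant of integration appears: participation and \<open>p \<le> 1\<close> squeeze the gain of a
  type \<open>a\<close> between \<open>0\<close> and \<open>a\<close>.\<close>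

lemma feasible_interim_envelope:
  assumes feas: "feasible_interim p m" and rules: "interim_rule p" "interim_rule m"
    and s: "s \<in> {0<..<1}"
  shows "interim_gain p m s s = (LINT r:{0<..s}|lborel. p r + m r)"
proof -
  define Q where "Q r = p r + m r" for r
  define V where "V x = (LINT r:{0<..x}|lborel. Q r)" for x
  define G where "G x = interim_gain p m x x - V x" for x
  have Q_bounds: "0 \<le> Q r \<and> Q r \<le> 2" if "r \<in> {0<..<1}" for r
    using rules that unfolding interim_rule_def Q_def by fastforce
  have Q_int: "set_integrable lborel {0<..y} Q" if "y < 1" for y
    unfolding Q_def using rules that by (intro set_integral_add(1) set_integrable_interim_rule)
  have G_const: "G a = G s" if "0 < a" "a \<le> s" for a
  proof (rule eq_if_increments_bounded[where G = G and Q = Q])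
    fix x y assume "a \<le> x" "x \<le> y" "y \<le> s"
    moreover have "Q x \<le> Q r \<and> Q r \<le> Q y" if "r \<in> {x<..y}" for r
      using feasible_interim_total_mono[OF feas] that \<open>a \<le> x\<close> \<open>0 < a\<close> \<open>y \<le> s\<close> s
      unfolding Q_def by auto
    ultimately have "(y - x) * Q x \<le> V y - V x" "V y - V x \<le> (y - x) * Q y"
      using set_integral_Ioc_increment_bounds[of 0 x y Q] Q_int[of y] that s unfolding V_def by auto
    moreover have "(y - x) * Q x \<le> interim_gain p m y y - interim_gain p m x x"
      "interim_gain p m y y - interim_gain p m x x \<le> (y - x) * Q y"
      using feasible_interim_gain_bounds[OF feas, of x y] \<open>a \<le> x\<close> \<open>x \<le> y\<close> \<open>y \<le> s\<close> that s
      unfolding Q_def by auto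
    moreover have "(y - x) * (Q y - Q x) = (y - x) * Q y - (y - x) * Q x"
      by (simp add: algebra_simps)
    ultimately show "\<bar>G y - G x\<bar> \<le> (y - x) * (Q y - Q x)"
      unfolding G_def abs_le_iff by linarith
  qed (use that in auto)
  have "\<bar>G a\<bar> \<le> 3 * a" if "0 < a" "a \<le> s" for a
  proof -
    have "0 \<le> interim_gain p m a a"
      using feas that s unfolding feasible_interim_def by auto
    moreover have "a * p a \<le> a" "0 \<le> (1 - a) * m a"
      using rules that s unfolding interim_rule_def by (auto intro: mult_left_le)
    then have "interim_gain p m a a \<le> a"
      unfolding interim_gain_def by linarith
    moreover have "(a - 0) * 0 \<le> V a \<and> V a \<le> (a - 0) * 2"
      unfolding V_def using that s Q_bounds by (intro set_integral_Ioc_bounds Q_int) auto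
    ultimately show ?thesis
      unfolding G_def by auto
  qed
  then have "G s = 0"
    using s by (intro eq_0_if_const_and_small[where C = 3 and G = G and s = s, OF _ _ G_const]) auto
  then show ?thesis
    unfolding G_def V_def Q_def by linarith
qed

definition truncate :: "real \<Rightarrow> real \<Rightarrow> (real \<Rightarrow> real) \<Rightarrow> real \<Rightarrow> real" where
  "truncate t0 t1 p t = (if t \<le> t0 then 0 else if t < t1 then p t1 else p t)"

lemma interim_gain_truncate:
  "interim_gain (truncate t0 t1 p) (truncate t0 t1 m) s t =
     (if t \<le> t0 then 0 else if t < t1 then interim_gain p m s t1 else interim_gain p m s t)"
  unfolding truncate_def interim_gain_def by simp

lemma interim_rule_truncate:
  assumes "interim_rule p" "t1 \<in> {0<..<1}"
  shows "interim_rule (truncate t0 t1 p)"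
proof -
  have [measurable]: "p \<in> borel_measurable borel"
    using assms(1) unfolding interim_rule_def by simp
  have "truncate t0 t1 p \<in> borel_measurable borel"
    unfolding truncate_def[abs_def] by measurable
  then show ?thesis
    using assms unfolding interim_rule_def truncate_def by auto
qed

text \<open>Type \<open>t0\<close> is the one indifferent between exclusion and the allocation of type \<open>t1\<close>.\<close>

lemma feasible_interim_indifferent_type:
  assumes feas: "feasible_interim p m" and t1: "0 < t1" "t1 < 1" and pos: "0 < p t1 + m t1"
    and t0: "t0 = m t1 / (p t1 + m t1)"
  shows "interim_gain p m s t1 = (s - t0) * (p t1 + m t1)" and "t0 \<le> t1"
proof -
  show gain_t1: "interim_gain p m s t1 = (s - t0) * (p t1 + m t1)" for s
    using pos unfolding t0 interim_gain_def by (simp add: field_simps)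
  have "0 \<le> interim_gain p m t1 t1"
    using feas t1 unfolding feasible_interim_def by auto
  then show "t0 \<le> t1"
    using gain_t1[of t1] pos by (simp add: zero_le_mult_iff)
qed

lemma feasible_interim_truncate:
  assumes feas: "feasible_interim p m" and t1: "0 < t1" "t1 < 1" and pos: "0 < p t1 + m t1"
    and t0: "t0 = m t1 / (p t1 + m t1)"
  shows "feasible_interim (truncate t0 t1 p) (truncate t0 t1 m)"
proof -
  note gain_t1 = feasible_interim_indifferent_type(1)[OF assms]
    and t01 = feasible_interim_indifferent_type(2)[OF assms]
  have IC: "0 \<le> interim_gain p m s s" "\<And>t. t \<in> {0<..<1} \<Longrightarrow> interim_gain p m s t \<le> interim_gain p m s s"
    if "s \<in> {0<..<1}" for s
    using feas that unfolding feasible_interim_def by auto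
  show ?thesis
    unfolding feasible_interim_def interim_gain_truncate
  proof (intro ballI conjI)
    fix s t :: real assume s: "s \<in> {0<..<1}" and t: "t \<in> {0<..<1}"
    show "0 \<le> (if s \<le> t0 then 0 else if s < t1 then interim_gain p m s t1 else interim_gain p m s s)"
      using IC(1)[OF s] gain_t1[of s] pos by auto
    consider "s \<le> t0" | "t0 < s" "s < t1" | "t0 < s" "t1 \<le> s"
      by linarith
    then show "(if t \<le> t0 then 0 else if t < t1 then interim_gain p m s t1 else interim_gain p m s t)
        \<le> (if s \<le> t0 then 0 else if s < t1 then interim_gain p m s t1 else interim_gain p m s s)"
    proof cases
      case 1
      have "interim_gain p m s t1 \<le> 0"
        using 1 gain_t1[of s] pos by (simp add: mult_nonpos_nonneg)
      moreover have "interim_gain p m s t \<le> 0" if "t1 \<le> t"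
      proof (cases "s < t1")
        case True
        then show ?thesis
          using feasible_interim_gain_mono[OF feas, of s t1 t] s t that
            \<open>interim_gain p m s t1 \<le> 0\<close> by auto
      next
        case False
        then have "s = t1" "t0 = t1"
          using 1 t01 by auto
        then show ?thesis
          using IC(2)[OF s t] gain_t1[of s] by simp
      qed
      ultimately show ?thesis
        using 1 by auto
    next
      case 2
      then show ?thesis
        using feasible_interim_gain_mono[OF feas, of s t1 t] gain_t1[of s] pos s t by auto
    next
      case 3
      then show ?thesis
        using IC[OF s] IC(2)[OF s t] IC(2)[OF s, of t1] t1 by auto
    qed
  qed
qed

lemma set_integral_swap_primitive:
  fixes k h :: "real \<Rightarrow> real"
  assumes k: "set_integrable lborel {0<..t} k" and h: "h \<in> borel_measurable borel"
    and h_bound: "\<And>r. r \<in> {0<..t} \<Longrightarrow> \<bar>h r\<bar> \<le> C"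
  shows "(LINT s:{0<..t}|lborel. k s * (LINT r:{0<..s}|lborel. h r))
       = (LINT r:{0<..t}|lborel. h r * (LINT s:{r..t}|lborel. k s))"
    and "set_integrable lborel {0<..t} (\<lambda>r. h r * (LINT s:{r..t}|lborel. k s))"
proof -
  define k' where "k' s = indicator {0<..t} s * k s" for s
  have k'_int: "integrable lborel k'"
    using k unfolding set_integrable_def k'_def by simp
  then have [measurable]: "k' \<in> borel_measurable borel"
    by auto
  note [measurable] = h
  define F where "F s r = (if 0 < r \<and> r \<le> s then k' s * h r else 0)" for s r
  define B where "B s r = \<bar>k' s\<bar> * (\<bar>C\<bar> * indicator {0<..t} r)" for s r :: real
  have finite: "emeasure lborel {0<..t} < \<infinity>"
    by (rule emeasure_bounded_finite) simp
  have B_int: "integrable (lborel \<Otimes>\<^sub>M lborel) (case_prod B)"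
  proof (rule lborel_pair.Fubini_integrable)
    show "case_prod B \<in> borel_measurable (lborel \<Otimes>\<^sub>M lborel)"
      unfolding B_def by measurable
    have "(\<lambda>s. \<integral>r. norm (case_prod B (s, r)) \<partial>lborel) = (\<lambda>s. \<bar>k' s\<bar> * \<bar>C\<bar> * measure lborel {0<..t})"
      using finite by (auto simp: B_def abs_mult)
    then show "integrable lborel (\<lambda>s. \<integral>r. norm (case_prod B (s, r)) \<partial>lborel)"
      using k'_int by simp
    show "AE s in lborel. integrable lborel (\<lambda>r. case_prod B (s, r))"
      using finite by (auto simp: B_def integrable_indicator_iff)
  qed
  have F_int: "integrable (lborel \<Otimes>\<^sub>M lborel) (case_prod F)"
  proof (rule Bochner_Integration.integrable_bound[OF B_int])
    show "case_prod F \<in> borel_measurable (lborel \<Otimes>\<^sub>M lborel)"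
      unfolding F_def by measurable
    have "\<bar>F s r\<bar> \<le> \<bar>B s r\<bar>" for s r
      using h_bound[of r] by (auto simp: F_def B_def k'_def abs_mult split: split_indicator
          intro!: mult_left_mono order_trans[OF _ abs_ge_self[of C]])
    then show "AE x in lborel \<Otimes>\<^sub>M lborel. norm (case_prod F x) \<le> norm (case_prod B x)"
      by auto
  qed
  have inner_r: "(\<integral>r. F s r \<partial>lborel) = indicator {0<..t} s * (k s * (LINT r:{0<..s}|lborel. h r))" for s
  proof -
    have "(\<lambda>r. F s r) = (\<lambda>r. k' s * (indicator {0<..s} r * h r))"
      by (auto simp: F_def fun_eq_iff split: split_indicator)
    then show ?thesis
      by (simp add: k'_def set_lebesgue_integral_def)
  qed
  have inner_s: "(\<integral>s. F s r \<partial>lborel) = indicator {0<..t} r * (h r * (LINT s:{r..t}|lborel. k s))" for r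
  proof -
    have "(\<lambda>s. F s r) = (\<lambda>s. indicator {0<..t} r * (h r * (indicator {r..t} s * k s)))"
      by (auto simp: F_def k'_def fun_eq_iff split: split_indicator)
    then show ?thesis
      by (simp add: set_lebesgue_integral_def)
  qed
  have "(\<integral>r. (\<integral>s. F s r \<partial>lborel) \<partial>lborel) = (\<integral>s. (\<integral>r. F s r \<partial>lborel) \<partial>lborel)"
    by (rule lborel_pair.Fubini_integral[OF F_int])
  then show "(LINT s:{0<..t}|lborel. k s * (LINT r:{0<..s}|lborel. h r))
       = (LINT r:{0<..t}|lborel. h r * (LINT s:{r..t}|lborel. k s))"
    unfolding inner_r inner_s by (simp add: set_lebesgue_integral_def)
  have "integrable lborel (\<lambda>r. \<integral>s. F s r \<partial>lborel)"
    by (rule lborel_pair.integrable_snd[OF F_int])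
  then show "set_integrable lborel {0<..t} (\<lambda>r. h r * (LINT s:{r..t}|lborel. k s))"
    unfolding inner_s set_integrable_def by simp
qed

lemma set_integral_weighted_primitive:
  fixes f h H :: "real \<Rightarrow> real"
  assumes f: "set_integrable lborel {0<..t} f" and "t \<le> 1"
    and h: "h \<in> borel_measurable borel" "\<And>r. r \<in> {0<..t} \<Longrightarrow> \<bar>h r\<bar> \<le> C"
    and H: "H \<in> borel_measurable borel" "\<And>s. s \<in> {0<..t} \<Longrightarrow> H s = (LINT r:{0<..s}|lborel. h r)"
  defines "w \<equiv> \<lambda>r. 2 * r * (1 - r) * f r + (LINT s:{r..t}|lborel. f s * (2 * s - 1))"
  shows "(LINT s:{0<..t}|lborel. f s * (2 * s * (1 - s) * h s) + f s * (2 * s - 1) * H s)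
       = (LINT r:{0<..t}|lborel. h r * w r)"
    and "set_integrable lborel {0<..t} (\<lambda>r. h r * w r)"
proof -
  define k where "k s = f s * (2 * s - 1)" for s
  note [measurable] = h(1) H(1)
  have unit: "0 \<le> s * (1 - s)" "s * (1 - s) \<le> 1" "\<bar>2 * s - 1\<bar> \<le> 1" if "s \<in> {0<..t}" for s
    using that \<open>t \<le> 1\<close> by (auto intro: mult_le_one)
  have "\<bar>2 * s * (1 - s) * h s\<bar> \<le> 2 * 1 * C" if "s \<in> {0<..t}" for s
  proof -
    have "\<bar>2 * s * (1 - s) * h s\<bar> = 2 * (s * (1 - s)) * \<bar>h s\<bar>"
      using unit[OF that] by (simp add: abs_mult)
    also have "\<dots> \<le> 2 * 1 * C"
      using unit[OF that] h(2)[OF that] by (intro mult_mono mult_left_mono) auto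
    finally show ?thesis .
  qed
  then have int1: "set_integrable lborel {0<..t} (\<lambda>s. f s * (2 * s * (1 - s) * h s))"
    by (intro set_integrable_mult_bounded[OF f, where C = "2 * 1 * C"]) auto
  have k_int: "set_integrable lborel {0<..t} k"
    unfolding k_def using unit by (intro set_integrable_mult_bounded[OF f, where C = 1]) auto
  have "\<bar>H s\<bar> \<le> C" if s: "s \<in> {0<..t}" for s
  proof -
    have hs: "\<bar>h r\<bar> \<le> C" if "r \<in> {0<..s}" for r
      using h(2)[of r] that s by auto
    then have h_int: "set_integrable lborel {0<..s} h"
      by (intro set_integrable_bounded[where C = C]) auto
    have "- C \<le> h r \<and> h r \<le> C" if "r \<in> {0<..s}" for r
      using hs[OF that] by (auto simp: abs_le_iff)
    then have "(s - 0) * - C \<le> H s \<and> H s \<le> (s - 0) * C"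
      unfolding H(2)[OF s] using s by (intro set_integral_Ioc_bounds[OF _ h_int]) auto
    moreover have "0 \<le> C"
      using h(2)[OF s] by linarith
    ultimately show ?thesis
      using s \<open>t \<le> 1\<close> mult_left_le_one_le[of C s] by (auto simp: abs_le_iff)
  qed
  then have int2: "set_integrable lborel {0<..t} (\<lambda>s. k s * H s)"
    by (intro set_integrable_mult_bounded[OF k_int, where C = C]) auto
  note swap_primitive = set_integral_swap_primitive[OF k_int h]
  have "(LINT s:{0<..t}|lborel. k s * H s) = (LINT s:{0<..t}|lborel. k s * (LINT r:{0<..s}|lborel. h r))"
    using H(2) by (intro set_lebesgue_integral_cong) auto
  then have swap:
    "(LINT s:{0<..t}|lborel. k s * H s) = (LINT r:{0<..t}|lborel. h r * (LINT s:{r..t}|lborel. k s))"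
    using swap_primitive(1) by simp
  have hw: "h r * w r = f r * (2 * r * (1 - r) * h r) + h r * (LINT s:{r..t}|lborel. k s)" for r
    unfolding w_def k_def by (simp add: algebra_simps)
  show "set_integrable lborel {0<..t} (\<lambda>r. h r * w r)"
    using int1 swap_primitive(2) by (simp add: hw)
  show "(LINT s:{0<..t}|lborel. f s * (2 * s * (1 - s) * h s) + f s * (2 * s - 1) * H s)
       = (LINT r:{0<..t}|lborel. h r * w r)"
    using int1 int2 swap swap_primitive(2) by (simp add: hw k_def)
qed

text \<open>Revenue equivalence in integrated form: the change \<open>H\<close> of the gain is, by the envelope
  formula, a primitive of the change \<open>h\<close> of the total allocation.\<close>

lemma interim_revenue_difference:
  fixes f p m p' m' :: "real \<Rightarrow> real"
  assumes feas: "feasible_interim p m" "feasible_interim p' m'"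
    and rules: "interim_rule p" "interim_rule m" "interim_rule p'" "interim_rule m'"
    and f: "set_integrable lborel {0<..<1} f"
    and t1: "0 < t1" "t1 < 1"
    and agree: "\<And>r. t1 < r \<Longrightarrow> p' r = p r \<and> m' r = m r"
    and gain_t1: "interim_gain p' m' t1 t1 = interim_gain p m t1 t1"
  defines "h \<equiv> \<lambda>r. (p' r + m' r) - (p r + m r)"
    and "w \<equiv> \<lambda>r. 2 * r * (1 - r) * f r + (LINT s:{r..t1}|lborel. f s * (2 * s - 1))"
  shows "(LINT s:{0<..<1}|lborel. f s * (s * (p' s - p s) + (1 - s) * (m' s - m s)))
       = (LINT r:{0<..t1}|lborel. h r * w r)"
    and "set_integrable lborel {0<..t1} (\<lambda>r. h r * w r)"
    and "set_integrable lborel {0<..t1} h"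
    and "(LINT r:{0<..t1}|lborel. h r) = 0"
proof -
  define H where "H s = interim_gain p' m' s s - interim_gain p m s s" for s
  have [measurable]: "p \<in> borel_measurable borel" "m \<in> borel_measurable borel"
    "p' \<in> borel_measurable borel" "m' \<in> borel_measurable borel"
    using rules unfolding interim_rule_def by auto
  have bounds: "0 \<le> p r \<and> p r \<le> 1 \<and> 0 \<le> m r \<and> m r \<le> 1 \<and> 0 \<le> p' r \<and> p' r \<le> 1 \<and> 0 \<le> m' r \<and> m' r \<le> 1"
    if "r \<in> {0<..<1}" for r
    using rules that unfolding interim_rule_def by auto
  have h_bound: "\<bar>h r\<bar> \<le> 2" if "r \<in> {0<..<1}" for r
    using bounds[OF that] unfolding h_def by auto
  have int: "set_integrable lborel {0<..s} p" "set_integrable lborel {0<..s} m"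
    "set_integrable lborel {0<..s} p'" "set_integrable lborel {0<..s} m'" if "s < 1" for s
    using rules that by (simp_all add: set_integrable_interim_rule)
  have H_prim: "H s = (LINT r:{0<..s}|lborel. h r)" if "s \<in> {0<..<1}" for s
    using feasible_interim_envelope[OF feas(1) rules(1,2) that] int[of s]
      feasible_interim_envelope[OF feas(2) rules(3,4) that] that
    unfolding H_def h_def by simp
  show "set_integrable lborel {0<..t1} h"
    unfolding h_def using int[of t1] t1 by (intro set_integral_diff(1) set_integral_add(1)) auto
  show "(LINT r:{0<..t1}|lborel. h r) = 0"
    using H_prim[of t1] gain_t1 t1 unfolding H_def by simp
  have f1: "set_integrable lborel {0<..t1} f" and "t1 \<le> 1"
    using t1 by (auto intro: set_integrable_subset[OF f])
  have hm: "h \<in> borel_measurable borel" and Hm: "H \<in> borel_measurable borel"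
    unfolding H_def[abs_def] h_def interim_gain_def by measurable
  have hb: "\<bar>h r\<bar> \<le> 2" and Hp: "H r = (LINT r:{0<..r}|lborel. h r)" if "r \<in> {0<..t1}" for r
    using that t1 h_bound H_prim by auto
  note weighted = set_integral_weighted_primitive[where C = 2, OF f1 \<open>t1 \<le> 1\<close> hm hb Hm Hp]
  have "(LINT s:{0<..<1}|lborel. f s * (s * (p' s - p s) + (1 - s) * (m' s - m s)))
      = (LINT s:{0<..t1}|lborel. f s * (s * (p' s - p s) + (1 - s) * (m' s - m s)))"
    unfolding set_lebesgue_integral_def using agree t1
    by (intro Bochner_Integration.integral_cong) (auto split: split_indicator)
  also have "\<dots> = (LINT s:{0<..t1}|lborel. f s * (2 * s * (1 - s) * h s) + f s * (2 * s - 1) * H s)"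
  proof -
    have "f s * (s * (p' s - p s) + (1 - s) * (m' s - m s))
        = f s * (2 * s * (1 - s) * h s) + f s * (2 * s - 1) * H s" for s
      unfolding h_def H_def interim_gain_def by algebra
    then show ?thesis
      by simp
  qed
  also have "\<dots> = (LINT r:{0<..t1}|lborel. h r * w r)"
    unfolding w_def by (rule weighted(1))
  finally show "(LINT s:{0<..<1}|lborel. f s * (s * (p' s - p s) + (1 - s) * (m' s - m s)))
       = (LINT r:{0<..t1}|lborel. h r * w r)" .
  show "set_integrable lborel {0<..t1} (\<lambda>r. h r * w r)"
    unfolding w_def by (rule weighted(2))
qed

lemma set_integral_single_crossing_pos:
  fixes h w :: "real \<Rightarrow> real"
  assumes h_int: "set_integrable lborel {a<..b} h"
    and hw_int: "set_integrable lborel {a<..b} (\<lambda>r. h r * w r)"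
    and h_zero: "(LINT r:{a<..b}|lborel. h r) = 0"
    and w: "strict_mono_on {a<..b} w" and c: "a < c" "c \<le> b" and \<sigma>: "a \<le> \<sigma>" "\<sigma> < c"
    and below: "\<And>r. r \<in> {a<..c} \<Longrightarrow> h r \<le> 0" and above: "\<And>r. r \<in> {c<..b} \<Longrightarrow> 0 \<le> h r"
    and neg: "\<And>r. r \<in> {\<sigma><..<c} \<Longrightarrow> h r < 0"
  shows "0 < (LINT r:{a<..b}|lborel. h r * w r)"
proof -
  define G where "G r = h r * w r - h r * w c" for r
  have G_int: "set_integrable lborel {a<..b} G"
    unfolding G_def using hw_int h_int by (intro set_integral_diff) auto
  have "(LINT r:{a<..b}|lborel. G r) = (LINT r:{a<..b}|lborel. h r * w r) - (LINT r:{a<..b}|lborel. h r * w c)"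
    unfolding G_def using hw_int h_int by (intro set_integral_diff) auto
  moreover have "(LINT r:{a<..b}|lborel. h r * w c) = 0"
    using h_zero by simp
  moreover have "0 < (LINT r:{a<..b}|lborel. G r)"
  proof (rule set_integral_pos_interval[OF G_int _ _ _ \<sigma>(2)])
    have w_le: "w r \<le> w c" if "r \<in> {a<..c}" for r
      using that c strict_mono_onD[OF w, of r c] by (cases "r = c") auto
    have w_ge: "w c < w r" if "r \<in> {c<..b}" for r
      using that c strict_mono_onD[OF w, of c r] by auto
    show "0 \<le> G r" if "r \<in> {a<..b}" for r
    proof (cases "r \<le> c")
      case True
      then show ?thesis
        using that below[of r] w_le[of r] unfolding G_def right_diff_distrib[symmetric]
        by (auto intro: mult_nonpos_nonpos)
    next
      case False
      then show ?thesis
        using that above[of r] w_ge[of r] unfolding G_def right_diff_distrib[symmetric] by auto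
    qed
    show "0 < G r" if "r \<in> {\<sigma><..<c}" for r
      using that neg[of r] w_le[of r] strict_mono_onD[OF w, of r c] \<sigma> c
      unfolding G_def right_diff_distrib[symmetric] by (auto intro: mult_neg_neg)
  qed (use \<sigma> c in auto)
  ultimately show ?thesis
    by linarith
qed

lemma revenue_weight_strict_mono:
  fixes f :: "real \<Rightarrow> real"
  assumes f: "set_integrable lborel {0<..<1} f" "\<And>u. u \<in> {0<..<1} \<Longrightarrow> 0 \<le> f u"
    and weight: "strict_mono_on {0<..\<delta>} (\<lambda>r. r * (1 - r) * f r)" and "\<delta> \<le> 1/2" and "t \<le> \<delta>"
  shows "strict_mono_on {0<..t} (\<lambda>r. 2 * r * (1 - r) * f r + (LINT s:{r..t}|lborel. f s * (2 * s - 1)))"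
proof (rule strict_mono_onI)
  fix r r' assume r: "r \<in> {0<..t}" "r' \<in> {0<..t}" "r < r'"
  have k_int: "set_integrable lborel A (\<lambda>s. f s * (2 * s - 1))" if "A \<subseteq> {0<..<1}" "A \<in> sets lborel" for A
    using that by (intro set_integrable_mult_bounded[where C = 1] set_integrable_subset[OF f(1)])
      (auto dest!: subsetD[OF that(1)])
  have "(LINT s:{r..<r'} \<union> {r'..t}|lborel. f s * (2 * s - 1))
      = (LINT s:{r..<r'}|lborel. f s * (2 * s - 1)) + (LINT s:{r'..t}|lborel. f s * (2 * s - 1))"
    using r \<open>t \<le> \<delta>\<close> \<open>\<delta> \<le> 1/2\<close> by (intro set_integral_Un k_int) auto
  moreover have "{r..<r'} \<union> {r'..t} = {r..t}"
    using r by auto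
  moreover have "(LINT s:{r..<r'}|lborel. f s * (2 * s - 1)) \<le> (LINT s:{r..<r'}|lborel. 0)"
    using r \<open>t \<le> \<delta>\<close> \<open>\<delta> \<le> 1/2\<close> f(2) by (intro set_integral_mono k_int)
      (auto simp: set_integrable_def intro!: mult_nonneg_nonpos)
  moreover have "r * (1 - r) * f r < r' * (1 - r') * f r'"
    using strict_mono_onD[OF weight, of r r'] r \<open>t \<le> \<delta>\<close> by auto
  ultimately show "2 * r * (1 - r) * f r + (LINT s:{r..t}|lborel. f s * (2 * s - 1))
      < 2 * r' * (1 - r') * f r' + (LINT s:{r'..t}|lborel. f s * (2 * s - 1))"
    by simp
qed

lemma truncate_increases_revenue:
  fixes f p m :: "real \<Rightarrow> real"
  assumes feas: "feasible_interim p m" and rules: "interim_rule p" "interim_rule m"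
    and f: "set_integrable lborel {0<..<1} f" "\<And>u. u \<in> {0<..<1} \<Longrightarrow> 0 \<le> f u"
    and weight: "strict_mono_on {0<..\<delta>} (\<lambda>r. r * (1 - r) * f r)" and \<delta>: "\<delta> \<le> 1/2"
    and t1: "0 < t1" "t1 \<le> \<delta>" "0 < m t1" and t0: "t0 = m t1 / (p t1 + m t1)"
    and \<sigma>: "0 < \<sigma>" "\<sigma> < t0" "0 < m \<sigma>"
  shows "0 < (LINT s:{0<..<1}|lborel.
    f s * (s * (truncate t0 t1 p s - p s) + (1 - s) * (truncate t0 t1 m s - m s)))"
proof -
  have t1': "t1 < 1"
    using t1 \<delta> by linarith
  have bounds: "0 \<le> p r \<and> p r \<le> 1 \<and> 0 \<le> m r \<and> m r \<le> 1" if "r \<in> {0<..<1}" for r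
    using rules that unfolding interim_rule_def by auto
  have pos: "0 < p t1 + m t1"
    using bounds[of t1] t1 t1' by auto
  note indifferent = feasible_interim_indifferent_type[OF feas t1(1) t1' pos t0]
  have gain_t1: "interim_gain (truncate t0 t1 p) (truncate t0 t1 m) t1 t1 = interim_gain p m t1 t1"
    using indifferent by (cases "t1 \<le> t0") (simp_all add: interim_gain_truncate)
  have agree: "truncate t0 t1 p r = p r \<and> truncate t0 t1 m r = m r" if "t1 < r" for r
    using that indifferent(2) unfolding truncate_def by auto
  have rules_trunc: "interim_rule (truncate t0 t1 p)" "interim_rule (truncate t0 t1 m)"
    using interim_rule_truncate rules t1(1) t1' by auto
  define h where "h r = (truncate t0 t1 p r + truncate t0 t1 m r) - (p r + m r)" for r
  define w where "w r = 2 * r * (1 - r) * f r + (LINT s:{r..t1}|lborel. f s * (2 * s - 1))" for r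
  note difference = interim_revenue_difference[OF feas feasible_interim_truncate[OF feas t1(1) t1' pos t0]
      rules rules_trunc f(1) t1(1) t1' agree gain_t1, folded h_def w_def]
  have "0 < (LINT r:{0<..t1}|lborel. h r * w r)"
  proof (rule set_integral_single_crossing_pos[OF difference(3,2,4), where c = t0 and \<sigma> = \<sigma>])
    show "strict_mono_on {0<..t1} w"
      unfolding w_def[abs_def] using revenue_weight_strict_mono[OF f weight \<delta> t1(2)] .
    show "h r \<le> 0" if "r \<in> {0<..t0}" for r
      using that bounds[of r] indifferent(2) t1' unfolding h_def truncate_def by auto
    show "0 \<le> h r" if "r \<in> {t0<..t1}" for r
      using that feasible_interim_total_mono[OF feas, of r t1] \<sigma> t1' unfolding h_def truncate_def by auto
    show "h r < 0" if "r \<in> {\<sigma><..<t0}" for r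
      using that feasible_interim_total_mono[OF feas, of \<sigma> r] bounds[of \<sigma>] \<sigma> indifferent(2) t1'
      unfolding h_def truncate_def by auto
  qed (use \<sigma> indifferent(2) in auto)
  then show ?thesis
    using difference(1) by simp
qed

lemma weight_strict_mono_near_0:
  fixes f :: "real \<Rightarrow> real"
  assumes pos: "\<And>u. u \<in> {0<..<1} \<Longrightarrow> 0 < f u"
    and diff: "\<And>u. u \<in> {0<..<1} \<Longrightarrow> f differentiable (at u)"
    and log_deriv: "\<And>u. u \<in> {0<..<1} \<Longrightarrow> \<bar>deriv f u / f u\<bar> \<le> B"
  obtains \<delta> where "0 < \<delta>" "\<delta> \<le> 1/2" "strict_mono_on {0<..\<delta>} (\<lambda>r. r * (1 - r) * f r)"
proof -
  have "\<bar>deriv f (1/2) / f (1/2)\<bar> \<le> B"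
    by (rule log_deriv) simp
  then have "0 \<le> B"
    by linarith
  define \<delta> where "\<delta> = 1 / (4 + 2 * B)"
  have \<delta>: "0 < \<delta>" "\<delta> \<le> 1/4" "\<delta> * (2 + B) = 1/2"
    using \<open>0 \<le> B\<close> by (auto simp: \<delta>_def field_simps)
  have "strict_mono_on {0<..\<delta>} (\<lambda>r. r * (1 - r) * f r)"
  proof (rule strict_mono_onI)
    fix r r' assume r: "r \<in> {0<..\<delta>}" "r' \<in> {0<..\<delta>}" "r < r'"
    show "r * (1 - r) * f r < r' * (1 - r') * f r'"
    proof (rule DERIV_pos_imp_increasing[OF \<open>r < r'\<close>])
      fix x assume x: "r \<le> x" "x \<le> r'"
      then have x01: "x \<in> {0<..<1}" and "x \<le> \<delta>"
        using r \<delta> by auto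
      then have "x * (2 + B) \<le> \<delta> * (2 + B)"
        using \<open>0 \<le> B\<close> by (intro mult_right_mono) auto
      then have "x * (2 + B) \<le> 1/2"
        using \<delta>(3) by linarith
      have fx: "0 < f x"
        using pos[OF x01] .
      have "- B \<le> deriv f x / f x"
        using log_deriv[OF x01] abs_le_iff[of "deriv f x / f x" B] by linarith
      then have "- B * f x \<le> deriv f x"
        using fx by (simp add: pos_le_divide_eq)
      then have "x * (1 - x) * (- B * f x) \<le> x * (1 - x) * deriv f x"
        using x01 by (intro mult_left_mono) auto
      moreover have "x * (1 - x) * (B * f x) \<le> x * (B * f x)"
        using x01 fx \<open>0 \<le> B\<close> by (intro mult_right_mono) auto
      ultimately have "(1 - 2 * x - x * B) * f x \<le> (1 - 2 * x) * f x + x * (1 - x) * deriv f x"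
        by (simp add: algebra_simps)
      moreover have "1/2 * f x \<le> (1 - 2 * x - x * B) * f x"
        using \<open>x * (2 + B) \<le> 1/2\<close> fx by (intro mult_right_mono) (auto simp: algebra_simps)
      ultimately have "0 < (1 - 2 * x) * f x + x * (1 - x) * deriv f x"
        using fx by linarith
      moreover have "DERIV (\<lambda>x. x * (1 - x) * f x) x :> (1 - 2 * x) * f x + x * (1 - x) * deriv f x"
        using diff[OF x01] by (auto intro!: derivative_eq_intros
            simp: DERIV_deriv_iff_real_differentiable[symmetric] algebra_simps)
      ultimately show "\<exists>y. DERIV (\<lambda>x. x * (1 - x) * f x) x :> y \<and> 0 < y"
        by blast
    qed
  qed
  then show ?thesis
    using that \<delta> by auto
qed

section \<open>Interim allocations of a mechanism\<close>

definition signal_density :: "(real \<Rightarrow> real) \<Rightarrow> bool" where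
  "signal_density g \<longleftrightarrow> g \<in> borel_measurable borel \<and> (\<forall>u. 0 \<le> g u) \<and> integrable lborel g \<and>
     (\<integral>u. g u \<partial>lborel) = 1 \<and> (\<forall>u. u \<notin> {0<..<1} \<longrightarrow> g u = 0)"

text \<open>The probability that agent \<open>i\<close> reporting \<open>t\<close> gets the good, given the state whose
  signal density is \<open>g\<close>; with \<open>g = fp\<close> and \<open>g = fm\<close> these are \<open>P\<close> and \<open>M\<close> above.\<close>

definition interim_alloc ::
  "(real \<Rightarrow> real) \<Rightarrow> (('a::finite \<Rightarrow> real) \<Rightarrow> 'a \<Rightarrow> real) \<Rightarrow> 'a \<Rightarrow> real \<Rightarrow> real" where
  "interim_alloc g x i t =
     (\<integral>r. (\<Prod>k\<in>UNIV - {i}. g (r k)) * x (r(i := t)) i \<partial>PiM (UNIV - {i}) (\<lambda>_. lborel))"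

lemma measurable_fun_upd_lborel:
  "(\<lambda>r::'a::finite \<Rightarrow> real. r(i := t)) \<in> measurable (PiM J (\<lambda>_. lborel)) (PiM UNIV (\<lambda>_. lborel))"
  if "UNIV - {i} \<subseteq> J"
  using that by (intro measurable_fun_upd[where J = J]) auto

lemma measurable_pair_fun_upd_lborel:
  "(\<lambda>p::real \<times> ('a::finite \<Rightarrow> real). (snd p)(i := fst p))
     \<in> measurable (lborel \<Otimes>\<^sub>M PiM (UNIV - {i}) (\<lambda>_. lborel)) (PiM UNIV (\<lambda>_. lborel))"
  by (rule measurable_fun_upd[where J = "UNIV - {i}"]) auto

lemma signal_density_prod:
  fixes J :: "'a::finite set"
  assumes "signal_density g"
  shows "integrable (PiM J (\<lambda>_. lborel)) (\<lambda>r. \<Prod>k\<in>J. g (r k))"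
    and "(\<integral>r. (\<Prod>k\<in>J. g (r k)) \<partial>PiM J (\<lambda>_. lborel)) = 1"
proof -
  interpret product_sigma_finite "\<lambda>_::'a. lborel"
    by standard
  show "integrable (PiM J (\<lambda>_. lborel)) (\<lambda>r. \<Prod>k\<in>J. g (r k))"
    using assms product_integrable_prod[of J "\<lambda>_. g"] unfolding signal_density_def by simp
  show "(\<integral>r. (\<Prod>k\<in>J. g (r k)) \<partial>PiM J (\<lambda>_. lborel)) = 1"
    using assms product_integral_prod[of J "\<lambda>_. g"] unfolding signal_density_def by simp
qed

lemma interim_integrand_bounds:
  assumes x: "is_mechanism x" and g: "signal_density g" and t: "t \<in> {0<..<1}"
  shows "0 \<le> (\<Prod>k\<in>UNIV - {i}. g (r k)) * x (r(i := t)) i"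
    and "(\<Prod>k\<in>UNIV - {i}. g (r k)) * x (r(i := t)) i \<le> (\<Prod>k\<in>UNIV - {i}. g (r k))"
proof -
  have "0 \<le> (\<Prod>k\<in>UNIV - {i}. g (r k)) * x (r(i := t)) i \<and>
      (\<Prod>k\<in>UNIV - {i}. g (r k)) * x (r(i := t)) i \<le> (\<Prod>k\<in>UNIV - {i}. g (r k))"
  proof (cases "sig_profile (r(i := t))")
    case True
    then have "0 \<le> x (r(i := t)) i \<and> x (r(i := t)) i \<le> 1"
      using x unfolding is_mechanism_def by blast
    moreover have "0 \<le> (\<Prod>k\<in>UNIV - {i}. g (r k))"
      using g unfolding signal_density_def by (simp add: prod_nonneg)
    ultimately show ?thesis
      by (simp add: mult_left_le)
  next
    case False
    then obtain k where "k \<noteq> i" "r k \<notin> {0<..<1}"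
      using t unfolding sig_profile_def by (auto split: if_splits)
    then have zero: "(\<Prod>k\<in>UNIV - {i}. g (r k)) = 0"
      using g unfolding signal_density_def by (intro prod_zero) auto
    show ?thesis
      unfolding zero by simp
  qed
  then show "0 \<le> (\<Prod>k\<in>UNIV - {i}. g (r k)) * x (r(i := t)) i"
    and "(\<Prod>k\<in>UNIV - {i}. g (r k)) * x (r(i := t)) i \<le> (\<Prod>k\<in>UNIV - {i}. g (r k))"
    by auto
qed

lemma interim_integrand_integrable:
  assumes x: "is_mechanism x" and g: "signal_density g" and t: "t \<in> {0<..<1}"
  shows "integrable (PiM (UNIV - {i}) (\<lambda>_. lborel)) (\<lambda>r. (\<Prod>k\<in>UNIV - {i}. g (r k)) * x (r(i := t)) i)"
proof (rule Bochner_Integration.integrable_bound[OF signal_density_prod(1)[OF g]])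
  have [measurable]: "g \<in> borel_measurable borel"
    and x_meas: "(\<lambda>s. x s i) \<in> borel_measurable (PiM UNIV (\<lambda>_. lborel))"
    using x g unfolding is_mechanism_def signal_density_def by auto
  have "(\<lambda>r. x (r(i := t)) i) \<in> borel_measurable (PiM (UNIV - {i}) (\<lambda>_. lborel))"
    using measurable_comp[OF measurable_fun_upd_lborel[where J = "UNIV - {i}", OF subset_refl] x_meas]
    by (simp add: comp_def)
  then show "(\<lambda>r. (\<Prod>k\<in>UNIV - {i}. g (r k)) * x (r(i := t)) i) \<in> borel_measurable (PiM (UNIV - {i}) (\<lambda>_. lborel))"
    by measurable
  show "AE r in PiM (UNIV - {i}) (\<lambda>_. lborel).
      norm ((\<Prod>k\<in>UNIV - {i}. g (r k)) * x (r(i := t)) i) \<le> norm (\<Prod>k\<in>UNIV - {i}. g (r k))"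
    using interim_integrand_bounds[OF x g t] by (intro AE_I2) (smt (verit) real_norm_def)
qed

lemma interim_alloc_bounds:
  assumes x: "is_mechanism x" and g: "signal_density g" and t: "t \<in> {0<..<1}"
  shows "0 \<le> interim_alloc g x i t \<and> interim_alloc g x i t \<le> 1"
proof
  show "0 \<le> interim_alloc g x i t"
    unfolding interim_alloc_def using interim_integrand_bounds(1)[OF x g t] by (intro integral_nonneg_AE) auto
  have "interim_alloc g x i t \<le> (\<integral>r. (\<Prod>k\<in>UNIV - {i}. g (r k)) \<partial>PiM (UNIV - {i}) (\<lambda>_. lborel))"
    unfolding interim_alloc_def using interim_integrand_bounds(2)[OF x g t]
    by (intro integral_mono interim_integrand_integrable[OF x g t] signal_density_prod(1)[OF g])
  then show "interim_alloc g x i t \<le> 1"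
    using signal_density_prod(2)[OF g, of "UNIV - {i}"] by simp
qed

lemma interim_alloc_measurable:
  assumes x: "is_mechanism x" and g: "signal_density g"
  shows "interim_alloc g x i \<in> borel_measurable borel"
proof -
  interpret product_sigma_finite "\<lambda>_::'a. lborel"
    by standard
  interpret sigma_finite_measure "PiM (UNIV - {i}) (\<lambda>_::'a. lborel)"
    by (rule sigma_finite) simp
  have [measurable]: "g \<in> borel_measurable borel"
    and x_meas: "(\<lambda>s. x s i) \<in> borel_measurable (PiM UNIV (\<lambda>_. lborel))"
    using x g unfolding is_mechanism_def signal_density_def by auto
  have "(\<lambda>p. x ((snd p)(i := fst p)) i) \<in> borel_measurable (lborel \<Otimes>\<^sub>M PiM (UNIV - {i}) (\<lambda>_. lborel))"
    using measurable_comp[OF measurable_pair_fun_upd_lborel x_meas] by (simp add: comp_def)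
  then have "(\<lambda>(t, r). (\<Prod>k\<in>UNIV - {i}. g (r k)) * x (r(i := t)) i)
      \<in> borel_measurable (lborel \<Otimes>\<^sub>M PiM (UNIV - {i}) (\<lambda>_. lborel))"
    by (simp add: case_prod_beta') measurable
  from borel_measurable_lebesgue_integral[OF this] show ?thesis
    unfolding interim_alloc_def[abs_def] by simp
qed

lemma interim_rule_interim_alloc:
  assumes "is_mechanism x" "signal_density g"
  shows "interim_rule (interim_alloc g x i)"
  using interim_alloc_bounds[OF assms] interim_alloc_measurable[OF assms] unfolding interim_rule_def by auto

lemma cond_gain_eq_interim_gain:
  assumes x: "is_mechanism x" and dens: "signal_density fp" "signal_density fm" and t: "t \<in> {0<..<1}"
  shows "cond_gain fp fm x i si t = interim_gain (interim_alloc fp x i) (interim_alloc fm x i) si t"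
proof -
  have "cond_gain fp fm x i si t =
      (\<integral>r. si * ((\<Prod>k\<in>UNIV - {i}. fp (r k)) * x (r(i := t)) i)
         - (1 - si) * ((\<Prod>k\<in>UNIV - {i}. fm (r k)) * x (r(i := t)) i) \<partial>PiM (UNIV - {i}) (\<lambda>_. lborel))"
    unfolding cond_gain_def by (simp add: algebra_simps)
  then show ?thesis
    unfolding interim_alloc_def interim_gain_def
    using interim_integrand_integrable[OF x dens(1) t] interim_integrand_integrable[OF x dens(2) t] by simp
qed

lemma feasible_iff_feasible_interim:
  assumes "is_mechanism x" "signal_density fp" "signal_density fm"
  shows "feasible fp fm x i \<longleftrightarrow> feasible_interim (interim_alloc fp x i) (interim_alloc fm x i)"
  using cond_gain_eq_interim_gain[OF assms] unfolding feasible_def feasible_interim_def by simp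

lemma prod_fun_upd_split:
  fixes g :: "real \<Rightarrow> real" and y :: "'a::finite \<Rightarrow> real"
  shows "(\<Prod>k\<in>UNIV. g ((y(i := t)) k)) = g t * (\<Prod>k\<in>UNIV - {i}. g (y k))"
proof -
  have "(\<Prod>k\<in>UNIV. g ((y(i := t)) k)) = g t * (\<Prod>k\<in>UNIV - {i}. g ((y(i := t)) k))"
    by (subst prod.remove[of _ i]) auto
  also have "(\<Prod>k\<in>UNIV - {i}. g ((y(i := t)) k)) = (\<Prod>k\<in>UNIV - {i}. g (y k))"
    by (rule prod.cong) auto
  finally show ?thesis .
qed

lemma integral_PiM_lborel_fun_upd:
  fixes F :: "('a::finite \<Rightarrow> real) \<Rightarrow> real"
  assumes F: "integrable (PiM UNIV (\<lambda>_. lborel)) F"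
  shows "(\<integral>s. F s \<partial>PiM UNIV (\<lambda>_. lborel))
    = (\<integral>t. (\<integral>y. F (y(i := t)) \<partial>PiM (UNIV - {i}) (\<lambda>_. lborel)) \<partial>lborel)"
proof -
  interpret product_sigma_finite "\<lambda>_::'a. lborel"
    by standard
  interpret others: sigma_finite_measure "PiM (UNIV - {i}) (\<lambda>_::'a. lborel)"
    by (rule sigma_finite) simp
  have "(\<lambda>(t, y). F (y(i := t))) \<in> borel_measurable (lborel \<Otimes>\<^sub>M PiM (UNIV - {i}) (\<lambda>_. lborel))"
    using measurable_comp[OF measurable_pair_fun_upd_lborel borel_measurable_integrable[OF F]]
    by (simp add: comp_def case_prod_beta')
  note G_meas = others.borel_measurable_lebesgue_integral[OF this]
  have split: "(UNIV :: 'a set) = {i} \<union> (UNIV - {i})"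
    by auto
  have merge: "merge {i} (UNIV - {i}) (z, y) = y(i := z i)" for z y :: "'a \<Rightarrow> real"
    by (auto simp: merge_def fun_eq_iff)
  have "(\<integral>s. F s \<partial>PiM UNIV (\<lambda>_. lborel)) = integral\<^sup>L (PiM ({i} \<union> (UNIV - {i})) (\<lambda>_. lborel)) F"
    using split by simp
  also have "\<dots> = (\<integral>z. (\<integral>y. F (merge {i} (UNIV - {i}) (z, y)) \<partial>PiM (UNIV - {i}) (\<lambda>_. lborel))
      \<partial>PiM {i} (\<lambda>_. lborel))"
    using F split by (intro product_integral_fold) auto
  also have "\<dots> = (\<integral>t. (\<integral>y. F (y(i := t)) \<partial>PiM (UNIV - {i}) (\<lambda>_. lborel)) \<partial>lborel)"
    unfolding merge using G_meas by (intro product_integral_singleton) simp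
  finally show ?thesis .
qed

lemma integrable_expected_alloc_integrand:
  fixes x :: "('a::finite \<Rightarrow> real) \<Rightarrow> 'a \<Rightarrow> real"
  assumes x: "is_mechanism x" and dens: "signal_density fp" "signal_density fm"
  shows "integrable (PiM UNIV (\<lambda>_. lborel)) (\<lambda>s. ((\<Prod>k\<in>UNIV. fp (s k)) + (\<Prod>k\<in>UNIV. fm (s k))) / 2 * x s i)"
proof (rule Bochner_Integration.integrable_bound)
  show "integrable (PiM UNIV (\<lambda>_. lborel)) (\<lambda>s::'a \<Rightarrow> real. ((\<Prod>k\<in>UNIV. fp (s k)) + (\<Prod>k\<in>UNIV. fm (s k))) / 2)"
    by (intro integrable_divide Bochner_Integration.integrable_add
        signal_density_prod(1)[OF dens(1)] signal_density_prod(1)[OF dens(2)])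
  have [measurable]: "fp \<in> borel_measurable borel" "fm \<in> borel_measurable borel"
    "(\<lambda>s. x s i) \<in> borel_measurable (PiM UNIV (\<lambda>_. lborel))"
    using x dens unfolding is_mechanism_def signal_density_def by auto
  show "(\<lambda>s. ((\<Prod>k\<in>UNIV. fp (s k)) + (\<Prod>k\<in>UNIV. fm (s k))) / 2 * x s i)
      \<in> borel_measurable (PiM UNIV (\<lambda>_. lborel))"
    by measurable
  have "norm (((\<Prod>k\<in>UNIV. fp (s k)) + (\<Prod>k\<in>UNIV. fm (s k))) / 2 * x s i)
      \<le> norm (((\<Prod>k\<in>UNIV. fp (s k)) + (\<Prod>k\<in>UNIV. fm (s k))) / 2)" for s
  proof (cases "sig_profile s")
    case True
    then have "0 \<le> x s i \<and> x s i \<le> 1"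
      using x unfolding is_mechanism_def by blast
    moreover have "0 \<le> ((\<Prod>k\<in>UNIV. fp (s k)) + (\<Prod>k\<in>UNIV. fm (s k))) / 2"
      using dens unfolding signal_density_def by (simp add: prod_nonneg)
    ultimately show ?thesis
      by (simp add: abs_mult mult_left_le)
  next
    case False
    then obtain k where "s k \<notin> {0<..<1}"
      unfolding sig_profile_def by blast
    then have zero: "(\<Prod>k\<in>UNIV. fp (s k)) = 0" "(\<Prod>k\<in>UNIV. fm (s k)) = 0"
      using dens unfolding signal_density_def by (auto intro!: prod_zero)
    show ?thesis
      unfolding zero by simp
  qed
  then show "AE s in PiM UNIV (\<lambda>_. lborel). norm (((\<Prod>k\<in>UNIV. fp (s k)) + (\<Prod>k\<in>UNIV. fm (s k))) / 2 * x s i)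
      \<le> norm (((\<Prod>k\<in>UNIV. fp (s k)) + (\<Prod>k\<in>UNIV. fm (s k))) / 2)"
    by simp
qed

lemma expected_alloc_eq:
  fixes x :: "('a::finite \<Rightarrow> real) \<Rightarrow> 'a \<Rightarrow> real"
  assumes x: "is_mechanism x" and dens: "signal_density fp" "signal_density fm"
  shows "expected_alloc fp fm x i
    = (\<integral>t. (fp t * interim_alloc fp x i t + fm t * interim_alloc fm x i t) / 2 \<partial>lborel)"
proof -
  have inner: "(\<integral>y. ((\<Prod>k\<in>UNIV. fp ((y(i := t)) k)) + (\<Prod>k\<in>UNIV. fm ((y(i := t)) k))) / 2 * x (y(i := t)) i
      \<partial>PiM (UNIV - {i}) (\<lambda>_. lborel))
    = (fp t * interim_alloc fp x i t + fm t * interim_alloc fm x i t) / 2" for t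
  proof (cases "t \<in> {0<..<1}")
    case True
    have "(\<integral>y. ((\<Prod>k\<in>UNIV. fp ((y(i := t)) k)) + (\<Prod>k\<in>UNIV. fm ((y(i := t)) k))) / 2 * x (y(i := t)) i
        \<partial>PiM (UNIV - {i}) (\<lambda>_. lborel))
      = (\<integral>y. fp t / 2 * ((\<Prod>k\<in>UNIV - {i}. fp (y k)) * x (y(i := t)) i)
        + fm t / 2 * ((\<Prod>k\<in>UNIV - {i}. fm (y k)) * x (y(i := t)) i) \<partial>PiM (UNIV - {i}) (\<lambda>_. lborel))"
      unfolding prod_fun_upd_split by (simp add: algebra_simps add_divide_distrib)
    also have "\<dots> = fp t / 2 * interim_alloc fp x i t + fm t / 2 * interim_alloc fm x i t"
      unfolding interim_alloc_def
      using interim_integrand_integrable[OF x dens(1) True] interim_integrand_integrable[OF x dens(2) True]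
      by simp
    finally show ?thesis
      by (simp add: add_divide_distrib)
  next
    case False
    then show ?thesis
      using dens unfolding prod_fun_upd_split signal_density_def by simp
  qed
  show ?thesis
    unfolding expected_alloc_def
      integral_PiM_lborel_fun_upd[where i = i, OF integrable_expected_alloc_integrand[OF x dens]]
    by (simp only: inner)
qed

lemma integrable_interim_expected_alloc:
  assumes x: "is_mechanism x" and dens: "signal_density fp" "signal_density fm"
  shows "integrable lborel (\<lambda>t. (fp t * interim_alloc fp x i t + fm t * interim_alloc fm x i t) / 2)"
proof (rule Bochner_Integration.integrable_bound[where f = "\<lambda>t. (fp t + fm t) / 2"])
  show "integrable lborel (\<lambda>t. (fp t + fm t) / 2)"
    using dens unfolding signal_density_def by auto
  have [measurable]: "fp \<in> borel_measurable borel" "fm \<in> borel_measurable borel"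
    "interim_alloc fp x i \<in> borel_measurable borel" "interim_alloc fm x i \<in> borel_measurable borel"
    using dens interim_alloc_measurable[OF x dens(1)] interim_alloc_measurable[OF x dens(2)]
    unfolding signal_density_def by auto
  show "(\<lambda>t. (fp t * interim_alloc fp x i t + fm t * interim_alloc fm x i t) / 2) \<in> borel_measurable lborel"
    by measurable
  have "norm ((fp t * interim_alloc fp x i t + fm t * interim_alloc fm x i t) / 2) \<le> norm ((fp t + fm t) / 2)" for t
  proof (cases "t \<in> {0<..<1}")
    case True
    then have "0 \<le> fp t * interim_alloc fp x i t \<and> fp t * interim_alloc fp x i t \<le> fp t"
      and "0 \<le> fm t * interim_alloc fm x i t \<and> fm t * interim_alloc fm x i t \<le> fm t"
      using interim_alloc_bounds[OF x dens(1) True] interim_alloc_bounds[OF x dens(2) True] dens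
      unfolding signal_density_def by (auto intro: mult_left_le)
    then show ?thesis
      by simp
  next
    case False
    then show ?thesis
      using dens unfolding signal_density_def by simp
  qed
  then show "AE t in lborel. norm ((fp t * interim_alloc fp x i t + fm t * interim_alloc fm x i t) / 2)
      \<le> norm ((fp t + fm t) / 2)"
    by simp
qed

definition truncate_mech ::
  "real \<Rightarrow> real \<Rightarrow> 'a \<Rightarrow> (('a::finite \<Rightarrow> real) \<Rightarrow> 'a \<Rightarrow> real) \<Rightarrow> ('a \<Rightarrow> real) \<Rightarrow> 'a \<Rightarrow> real" where
  "truncate_mech t0 t1 i x s j = (if j = i then truncate t0 t1 (\<lambda>t. x (s(i := t)) i) (s i) else x s j)"

lemma interim_alloc_truncate_mech:
  "interim_alloc g (truncate_mech t0 t1 i x) i = truncate t0 t1 (interim_alloc g x i)"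
  unfolding interim_alloc_def truncate_mech_def truncate_def by (auto simp: fun_eq_iff)

lemma is_mechanism_truncate_mech:
  assumes x: "is_mechanism x" and t1: "t1 \<in> {0<..<1}"
  shows "is_mechanism (truncate_mech t0 t1 i x)"
  unfolding is_mechanism_def
proof (intro conjI allI impI)
  fix j
  have x_meas: "(\<lambda>s. x s j) \<in> borel_measurable (PiM UNIV (\<lambda>_. lborel))" for j
    using x unfolding is_mechanism_def by blast
  have [measurable]: "(\<lambda>s. x (s(i := t1)) i) \<in> borel_measurable (PiM UNIV (\<lambda>_. lborel))"
    using measurable_comp[OF measurable_fun_upd_lborel[where J = UNIV, OF subset_UNIV] x_meas]
    by (simp add: comp_def)
  have [measurable]: "(\<lambda>s::'a \<Rightarrow> real. s i) \<in> borel_measurable (PiM UNIV (\<lambda>_. lborel))"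
    using measurable_component_singleton[of i UNIV "\<lambda>_::'a. lborel"] by simp
  note [measurable] = x_meas
  have "(\<lambda>s. truncate_mech t0 t1 i x s i) = (\<lambda>s. if s i \<le> t0 then 0 else if s i < t1 then x (s(i := t1)) i else x s i)"
    by (auto simp: truncate_mech_def truncate_def fun_eq_iff)
  then show "(\<lambda>s. truncate_mech t0 t1 i x s j) \<in> borel_measurable (PiM UNIV (\<lambda>_. lborel))"
    by (cases "j = i") (simp_all add: truncate_mech_def)
next
  fix s :: "'a \<Rightarrow> real" and j assume s: "sig_profile s"
  then have "sig_profile (s(i := t1))"
    using t1 unfolding sig_profile_def by auto
  then show "0 \<le> truncate_mech t0 t1 i x s j" "truncate_mech t0 t1 i x s j \<le> 1"
    using x s unfolding is_mechanism_def truncate_mech_def truncate_def by auto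
qed

section \<open>Threshold mechanisms and optimality\<close>

lemma LR_minus_ge_of_signals_above:
  fixes s :: "'a::finite \<Rightarrow> real"
  assumes n2: "2 \<le> CARD('a)" and "1 \<le> T" and above: "\<And>k. k \<noteq> i \<Longrightarrow> s k \<in> {T / (1 + T)<..<1}"
  shows "T \<le> LR_minus i s"
proof -
  have "1 \<le> card (UNIV - {i})"
    using n2 by (simp add: card_Diff_singleton)
  have ratio: "T \<le> s k / (1 - s k)" if "k \<in> UNIV - {i}" for k
    using above[of k] that \<open>1 \<le> T\<close> by (auto simp: field_simps)
  have "T \<le> T ^ card (UNIV - {i})"
    using power_increasing[OF \<open>1 \<le> card (UNIV - {i})\<close> \<open>1 \<le> T\<close>] by simp
  also have "\<dots> = (\<Prod>k\<in>UNIV - {i}. T)"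
    by simp
  also have "\<dots> \<le> (\<Prod>k\<in>UNIV - {i}. s k / (1 - s k))"
    using ratio \<open>1 \<le> T\<close> by (intro prod_mono) auto
  finally show ?thesis
    unfolding LR_minus_def .
qed

lemma signal_density_mass_pos:
  assumes g: "signal_density g" "\<And>u. u \<in> {0<..<1} \<Longrightarrow> 0 < g u" and c: "0 \<le> c" "c < 1"
  shows "integrable lborel (\<lambda>u. g u * indicator {c<..<1} u)"
    and "0 < (\<integral>u. g u * indicator {c<..<1} u \<partial>lborel)"
proof -
  have "set_integrable lborel {c<..<1} g"
    using g(1) unfolding set_integrable_def signal_density_def by (intro integrable_mult_indicator) auto
  then show "integrable lborel (\<lambda>u. g u * indicator {c<..<1} u)"
    unfolding set_integrable_def by (simp add: mult.commute)
  have "0 < (LINT u:{c<..<1}|lborel. g u)"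
    by (rule set_integral_pos_interval[OF \<open>set_integrable lborel {c<..<1} g\<close> _ _ order_refl \<open>c < 1\<close>])
      (use g c in \<open>auto simp: signal_density_def\<close>)
  then show "0 < (\<integral>u. g u * indicator {c<..<1} u \<partial>lborel)"
    unfolding set_lebesgue_integral_def by (simp add: mult.commute)
qed

text \<open>With at least one other agent, the others' likelihood ratio exceeds any threshold with
  positive probability: it suffices that all their signals are close to \<open>1\<close>.\<close>

lemma interim_alloc_pos_of_threshold:
  fixes x :: "('a::finite \<Rightarrow> real) \<Rightarrow> 'a \<Rightarrow> real"
  assumes x: "is_mechanism x" and n2: "2 \<le> CARD('a)"
    and g: "signal_density g" "\<And>u. u \<in> {0<..<1} \<Longrightarrow> 0 < g u"
    and \<sigma>: "\<sigma> \<in> {0<..<1}" and \<kappa>: "0 < \<kappa>"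
    and thr: "\<And>s. sig_profile s \<Longrightarrow> s i = \<sigma> \<Longrightarrow> x s i = \<kappa> * (if \<tau> \<le> LR_minus i s then 1 else 0)"
  shows "0 < interim_alloc g x i \<sigma>"
proof -
  interpret product_sigma_finite "\<lambda>_::'a. lborel"
    by standard
  define J where "J = (UNIV :: 'a set) - {i}"
  define T where "T = max 1 \<tau>"
  define c where "c = T / (1 + T)"
  have "1 \<le> T" "0 < c" "c < 1"
    unfolding T_def c_def by (auto simp: field_simps)
  define g' where "g' u = g u * indicator {c<..<1} u" for u
  note g' = signal_density_mass_pos[OF g less_imp_le[OF \<open>0 < c\<close>] \<open>c < 1\<close>, folded g'_def]
  have below: "\<kappa> * (\<Prod>k\<in>J. g' (r k)) \<le> (\<Prod>k\<in>J. g (r k)) * x (r(i := \<sigma>)) i" for r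
  proof (cases "\<forall>k\<in>J. r k \<in> {c<..<1}")
    case True
    have "\<tau> \<le> T"
      unfolding T_def by simp
    also have "T \<le> LR_minus i (r(i := \<sigma>))"
      using True by (intro LR_minus_ge_of_signals_above[OF n2 \<open>1 \<le> T\<close>]) (auto simp: J_def c_def)
    finally have "\<tau> \<le> LR_minus i (r(i := \<sigma>))" .
    moreover have "sig_profile (r(i := \<sigma>))"
      unfolding sig_profile_def
    proof
      fix k
      show "(r(i := \<sigma>)) k \<in> {0<..<1}"
        using True \<sigma> \<open>0 < c\<close> unfolding J_def by (cases "k = i") force+
    qed
    moreover have "(\<Prod>k\<in>J. g' (r k)) = (\<Prod>k\<in>J. g (r k))"
      using True by (intro prod.cong) (auto simp: g'_def)
    ultimately show ?thesis
      using thr[of "r(i := \<sigma>)"] by simp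
  next
    case False
    then obtain k where "k \<in> J" "r k \<notin> {c<..<1}"
      by blast
    then have zero: "(\<Prod>k\<in>J. g' (r k)) = 0"
      unfolding g'_def by (intro prod_zero) (auto intro!: bexI[of _ k])
    have "0 \<le> (\<Prod>k\<in>J. g (r k)) * x (r(i := \<sigma>)) i"
      using interim_integrand_bounds(1)[OF x g(1) \<sigma>, where i = i and r = r] unfolding J_def .
    then show ?thesis
      unfolding zero by simp
  qed
  have "0 < \<kappa> * (\<Prod>k\<in>J. integral\<^sup>L lborel g')"
    using \<kappa> g'(2) by (simp add: prod_pos)
  also have "\<dots> = (\<integral>r. \<kappa> * (\<Prod>k\<in>J. g' (r k)) \<partial>PiM J (\<lambda>_. lborel))"
    using product_integral_prod[of J "\<lambda>_. g'"] g'(1) by simp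
  also have "\<dots> \<le> interim_alloc g x i \<sigma>"
    unfolding interim_alloc_def J_def[symmetric]
  proof (rule integral_mono[OF _ _ below])
    show "integrable (PiM J (\<lambda>_. lborel)) (\<lambda>r. \<kappa> * (\<Prod>k\<in>J. g' (r k)))"
      using product_integrable_prod[of J "\<lambda>_. g'"] g'(1) by simp
    show "integrable (PiM J (\<lambda>_. lborel)) (\<lambda>r. (\<Prod>k\<in>J. g (r k)) * x (r(i := \<sigma>)) i)"
      using interim_integrand_integrable[OF x g(1) \<sigma>, of i] unfolding J_def .
  qed
  finally show ?thesis .
qed

lemma mono_threshold_interim_alloc_pos:
  fixes x :: "('a::finite \<Rightarrow> real) \<Rightarrow> 'a \<Rightarrow> real"
  assumes x: "is_mechanism x" "mono_threshold x i" and n2: "2 \<le> CARD('a)"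
    and g: "signal_density g" "\<And>u. u \<in> {0<..<1} \<Longrightarrow> 0 < g u"
    and s: "sig_profile s" "x s i \<noteq> 0"
  shows "0 < interim_alloc g x i (s i)"
proof -
  obtain P where P: "\<Union>P = {0<..<1}" "\<forall>S\<in>P. \<exists>\<kappa> \<tau>. 0 \<le> \<kappa> \<and> \<kappa> \<le> 1 \<and> 0 \<le> \<tau> \<and>
      (\<forall>s. sig_profile s \<and> s i \<in> S \<longrightarrow> x s i = \<kappa> * (if LR_minus i s \<ge> \<tau> then 1 else 0))"
    using x(2) unfolding mono_threshold_def by blast
  have "s i \<in> {0<..<1}"
    using s(1) unfolding sig_profile_def by blast
  then obtain S where "S \<in> P" "s i \<in> S"
    using P(1) by blast
  then obtain \<kappa> \<tau> where "0 \<le> \<kappa>"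
    and thr: "\<And>s'. sig_profile s' \<Longrightarrow> s' i \<in> S \<Longrightarrow> x s' i = \<kappa> * (if \<tau> \<le> LR_minus i s' then 1 else 0)"
    using P(2) by blast
  have "0 < \<kappa>"
    using thr[OF s(1) \<open>s i \<in> S\<close>] s(2) \<open>0 \<le> \<kappa>\<close> by (cases "\<kappa> = 0") auto
  show ?thesis
    using thr \<open>s i \<in> S\<close>
    by (intro interim_alloc_pos_of_threshold[OF x(1) n2 g \<open>s i \<in> {0<..<1}\<close> \<open>0 < \<kappa>\<close>]) auto
qed

lemma efficient_mech_threshold:
  assumes "sig_profile s"
  shows "efficient_mech s i = 1 * (if (1 - s i) / s i \<le> LR_minus i s then 1 else 0)"
proof -
  have "LR_full s = s i / (1 - s i) * LR_minus i s"
    unfolding LR_full_def LR_minus_def by (rule prod.remove) auto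
  moreover have "0 < s i" "s i < 1"
    using assms unfolding sig_profile_def by auto
  then have "1 \<le> s i / (1 - s i) * L \<longleftrightarrow> (1 - s i) / s i \<le> L" for L
    by (simp add: field_simps)
  ultimately show ?thesis
    unfolding efficient_mech_def by simp
qed

locale binary_signal =
  fixes fp fm :: "real \<Rightarrow> real" and B :: real
  assumes densities: "signal_density fp" "signal_density fm"
    and normalized: "\<And>u. u \<in> {0<..<1} \<Longrightarrow> fp u / (fp u + fm u) = u"
    and mixf_pos: "\<And>u. u \<in> {0<..<1} \<Longrightarrow> 0 < mixf fp fm u"
    and mixf_differentiable: "\<And>u. u \<in> {0<..<1} \<Longrightarrow> mixf fp fm differentiable (at u)"
    and log_deriv_bound: "\<And>u. u \<in> {0<..<1} \<Longrightarrow> \<bar>deriv (mixf fp fm) u / mixf fp fm u\<bar> \<le> B"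
begin

lemma fp_eq_mixf: "u \<in> {0<..<1} \<Longrightarrow> fp u = 2 * u * mixf fp fm u"
  using mixf_pos[of u] normalized[of u] unfolding mixf_def by (simp add: divide_eq_eq)

lemma fm_eq_mixf: "u \<in> {0<..<1} \<Longrightarrow> fm u = 2 * (1 - u) * mixf fp fm u"
  using fp_eq_mixf[of u] unfolding mixf_def by (simp add: algebra_simps)

lemma fm_pos: "u \<in> {0<..<1} \<Longrightarrow> 0 < fm u"
  using fm_eq_mixf mixf_pos by simp

lemma expected_alloc_diff:
  assumes x: "is_mechanism x" and y: "is_mechanism y"
  shows "expected_alloc fp fm y i - expected_alloc fp fm x i =
    (LINT s:{0<..<1}|lborel. mixf fp fm s * (s * (interim_alloc fp y i s - interim_alloc fp x i s)
      + (1 - s) * (interim_alloc fm y i s - interim_alloc fm x i s)))"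
proof -
  have "expected_alloc fp fm y i - expected_alloc fp fm x i =
      (\<integral>t. (fp t * interim_alloc fp y i t + fm t * interim_alloc fm y i t) / 2
        - (fp t * interim_alloc fp x i t + fm t * interim_alloc fm x i t) / 2 \<partial>lborel)"
    unfolding expected_alloc_eq[OF x densities] expected_alloc_eq[OF y densities]
    using integrable_interim_expected_alloc[OF x densities] integrable_interim_expected_alloc[OF y densities]
    by simp
  also have "\<dots> = (LINT s:{0<..<1}|lborel. mixf fp fm s * (s * (interim_alloc fp y i s - interim_alloc fp x i s)
      + (1 - s) * (interim_alloc fm y i s - interim_alloc fm x i s)))"
    unfolding set_lebesgue_integral_def
  proof (rule Bochner_Integration.integral_cong[OF refl])
    fix t
    show "(fp t * interim_alloc fp y i t + fm t * interim_alloc fm y i t) / 2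
        - (fp t * interim_alloc fp x i t + fm t * interim_alloc fm x i t) / 2
      = indicator {0<..<1} t *\<^sub>R (mixf fp fm t * (t * (interim_alloc fp y i t - interim_alloc fp x i t)
        + (1 - t) * (interim_alloc fm y i t - interim_alloc fm x i t)))"
    proof (cases "t \<in> {0<..<1}")
      case True
      then show ?thesis
        unfolding fp_eq_mixf[OF True] fm_eq_mixf[OF True] by (simp add: field_simps)
    next
      case False
      then show ?thesis
        using densities unfolding signal_density_def by simp
    qed
  qed
  finally show ?thesis .
qed

lemma better_mechanism_exists:
  assumes x: "is_mechanism x" and feas: "feasible fp fm x i"
    and served: "\<And>\<epsilon>. 0 < \<epsilon> \<Longrightarrow> \<exists>\<sigma>\<in>{0<..<1}. \<sigma> \<le> \<epsilon> \<and> 0 < interim_alloc fm x i \<sigma>"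
  shows "\<exists>y. is_mechanism y \<and> feasible fp fm y i \<and> expected_alloc fp fm x i < expected_alloc fp fm y i"
proof -
  define P where "P = interim_alloc fp x i"
  define M where "M = interim_alloc fm x i"
  have rules: "interim_rule P" "interim_rule M"
    unfolding P_def M_def using interim_rule_interim_alloc[OF x] densities by auto
  have feas_interim: "feasible_interim P M"
    using feas feasible_iff_feasible_interim[OF x densities] unfolding P_def M_def by simp
  have f_int: "set_integrable lborel {0<..<1} (mixf fp fm)"
    using densities unfolding set_integrable_def signal_density_def mixf_def[abs_def]
    by (intro integrable_mult_indicator) auto
  obtain \<delta> where \<delta>: "0 < \<delta>" "\<delta> \<le> 1/2" and weight: "strict_mono_on {0<..\<delta>} (\<lambda>r. r * (1 - r) * mixf fp fm r)"
    using weight_strict_mono_near_0[OF mixf_pos mixf_differentiable log_deriv_bound] by blast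
  obtain t1 where t1: "t1 \<in> {0<..<1}" "t1 \<le> \<delta>" "0 < M t1"
    using served[OF \<delta>(1)] unfolding M_def by blast
  define t0 where "t0 = M t1 / (P t1 + M t1)"
  have "0 \<le> P t1"
    using rules t1(1) unfolding interim_rule_def by auto
  then have "0 < t0"
    using t1(3) unfolding t0_def by simp
  then obtain \<sigma> where \<sigma>: "\<sigma> \<in> {0<..<1}" "\<sigma> \<le> t0 / 2" "0 < M \<sigma>"
    using served[of "t0 / 2"] unfolding M_def by auto
  define y where "y = truncate_mech t0 t1 i x"
  have y: "is_mechanism y"
    unfolding y_def using x t1(1) by (rule is_mechanism_truncate_mech)
  have "0 < P t1 + M t1"
    using \<open>0 \<le> P t1\<close> t1(3) by simp
  then have "feasible_interim (truncate t0 t1 P) (truncate t0 t1 M)"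
    using feasible_interim_truncate[OF feas_interim _ _ _ t0_def] t1(1) by simp
  then have "feasible_interim (interim_alloc fp y i) (interim_alloc fm y i)"
    unfolding y_def interim_alloc_truncate_mech P_def[symmetric] M_def[symmetric] .
  then have "feasible fp fm y i"
    using feasible_iff_feasible_interim[OF y densities] by simp
  moreover have "0 < (LINT s:{0<..<1}|lborel. mixf fp fm s *
      (s * (truncate t0 t1 P s - P s) + (1 - s) * (truncate t0 t1 M s - M s)))"
    by (rule truncate_increases_revenue[OF feas_interim rules f_int _ weight \<delta>(2) _ t1(2,3) t0_def])
      (use mixf_pos t1(1) \<sigma> \<open>0 < t0\<close> in \<open>auto intro: less_imp_le\<close>)
  then have "expected_alloc fp fm x i < expected_alloc fp fm y i"
    using expected_alloc_diff[OF x y, where i = i]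
    unfolding y_def interim_alloc_truncate_mech P_def[symmetric] M_def[symmetric] by simp
  ultimately show ?thesis
    using y by auto
qed

lemma optimal_imp_bottom_unserved:
  assumes opt: "optimal fp fm x i"
  shows "\<exists>\<epsilon>>0. \<forall>\<sigma>\<in>{0<..<1}. \<sigma> \<le> \<epsilon> \<longrightarrow> interim_alloc fm x i \<sigma> = 0"
proof (rule ccontr)
  assume contra: "\<not> ?thesis"
  have x: "is_mechanism x" and feas: "feasible fp fm x i"
    using opt unfolding optimal_def by auto
  have "\<exists>\<sigma>\<in>{0<..<1}. \<sigma> \<le> \<epsilon> \<and> 0 < interim_alloc fm x i \<sigma>" if "0 < \<epsilon>" for \<epsilon>
  proof -
    have "\<not> (\<forall>\<sigma>\<in>{0<..<1}. \<sigma> \<le> \<epsilon> \<longrightarrow> interim_alloc fm x i \<sigma> = 0)"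
      using contra that by blast
    then obtain \<sigma> where \<sigma>: "\<sigma> \<in> {0<..<1}" "\<sigma> \<le> \<epsilon>" "interim_alloc fm x i \<sigma> \<noteq> 0"
      by blast
    then show ?thesis
      using interim_alloc_bounds[OF x densities(2) \<sigma>(1), of i] by force
  qed
  then obtain y where "is_mechanism y" "feasible fp fm y i" "expected_alloc fp fm x i < expected_alloc fp fm y i"
    using better_mechanism_exists[OF x feas] by blast
  with opt show False
    unfolding optimal_def by force
qed

lemma mono_threshold_optimal_excludes_bottom:
  fixes x :: "('a::finite \<Rightarrow> real) \<Rightarrow> 'a \<Rightarrow> real"
  assumes n2: "2 \<le> CARD('a)" and opt: "optimal fp fm x i" and thr: "mono_threshold x i"
  shows "\<exists>\<epsilon>>0. \<forall>s. sig_profile s \<and> s i \<le> \<epsilon> \<longrightarrow> x s i = 0"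
proof -
  obtain \<epsilon> where "0 < \<epsilon>" and unserved: "\<forall>\<sigma>\<in>{0<..<1}. \<sigma> \<le> \<epsilon> \<longrightarrow> interim_alloc fm x i \<sigma> = 0"
    using optimal_imp_bottom_unserved[OF opt] by blast
  have "x s i = 0" if s: "sig_profile s" "s i \<le> \<epsilon>" for s
  proof (rule ccontr)
    assume "x s i \<noteq> 0"
    then have "0 < interim_alloc fm x i (s i)"
      using opt thr n2 densities(2) fm_pos s(1) unfolding optimal_def
      by (blast intro: mono_threshold_interim_alloc_pos)
    moreover have "s i \<in> {0<..<1}"
      using s(1) unfolding sig_profile_def by blast
    ultimately show False
      using unserved s(2) by simp
  qed
  with \<open>0 < \<epsilon>\<close> show ?thesis
    by blast
qed

lemma efficient_mech_not_optimal:
  assumes n2: "2 \<le> CARD('a)"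
  shows "\<not> optimal fp fm (efficient_mech :: ('a::finite \<Rightarrow> real) \<Rightarrow> 'a \<Rightarrow> real) i"
proof
  assume opt: "optimal fp fm efficient_mech i"
  then obtain \<epsilon> where "0 < \<epsilon>"
    and unserved: "\<forall>\<sigma>\<in>{0<..<1}. \<sigma> \<le> \<epsilon> \<longrightarrow> interim_alloc fm efficient_mech i \<sigma> = 0"
    using optimal_imp_bottom_unserved by blast
  define \<sigma> where "\<sigma> = min \<epsilon> (1/2)"
  have \<sigma>: "\<sigma> \<in> {0<..<1}" "\<sigma> \<le> \<epsilon>"
    using \<open>0 < \<epsilon>\<close> by (auto simp: \<sigma>_def)
  have "0 < interim_alloc fm efficient_mech i \<sigma>"
    using opt efficient_mech_threshold[of _ i] fm_pos
    by (intro interim_alloc_pos_of_threshold[OF _ n2 densities(2) _ \<sigma>(1), where \<kappa> = 1 and \<tau> = "(1 - \<sigma>) / \<sigma>"])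
      (auto simp: optimal_def)
  then show False
    using unserved \<sigma> by simp
qed

end

theorem proposition1:
  fixes fp fm :: "real \<Rightarrow> real"
    and x :: "('a::finite \<Rightarrow> real) \<Rightarrow> 'a \<Rightarrow> real"
    and i :: 'a
  assumes n2: "CARD('a) \<ge> 2"
    and meas: "fp \<in> borel_measurable borel" "fm \<in> borel_measurable borel"
    and nonneg: "\<forall>u. 0 \<le> fp u \<and> 0 \<le> fm u"
    and int: "integrable lborel fp" "integrable lborel fm"
    and prob: "(\<integral>u. fp u \<partial>lborel) = 1" "(\<integral>u. fm u \<partial>lborel) = 1"
    and mutual_ac: "\<forall>u. fp u = 0 \<longleftrightarrow> fm u = 0"
    and normalized: "\<forall>u\<in>{0<..<1}. fp u / (fp u + fm u) = u"
    and support: "\<forall>u. 0 < mixf fp fm u \<longleftrightarrow> u \<in> {0<..<1}"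
    and diff: "\<forall>u\<in>{0<..<1}. mixf fp fm differentiable (at u)"
    and cont_deriv: "continuous_on {0<..<1} (deriv (mixf fp fm))"
    and bounded_ratio: "\<exists>B. \<forall>u\<in>{0<..<1}. \<bar>deriv (mixf fp fm) u / mixf fp fm u\<bar> \<le> B"
  shows "(is_mechanism x \<and> optimal fp fm x i \<and> mono_threshold x i \<longrightarrow>
            (\<exists>\<epsilon>>0. \<forall>s. sig_profile s \<and> s i \<le> \<epsilon> \<longrightarrow> x s i = 0))
         \<and> \<not> optimal fp fm efficient_mech i"
proof -
  obtain B where B: "\<And>u. u \<in> {0<..<1} \<Longrightarrow> \<bar>deriv (mixf fp fm) u / mixf fp fm u\<bar> \<le> B"
    using bounded_ratio by blast
  have "fp u = 0 \<and> fm u = 0" if "u \<notin> {0<..<1}" for u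
    using support that nonneg[rule_format, of u] unfolding mixf_def by force
  then have "signal_density fp" "signal_density fm"
    using meas nonneg int prob unfolding signal_density_def by auto
  then interpret binary_signal fp fm B
    using normalized support diff B by unfold_locales auto
  show ?thesis
    using mono_threshold_optimal_excludes_bottom efficient_mech_not_optimal n2 by blast
qed

end
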